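(* Let $E=(E^0,E^1,s,r)$ and $F=(F^0,F^1,s,r)$ be directed graphs. Then $E$ and $F$ are continuously orbit equivalent if and only if the canonical actions $\theta^E$ of $\mathcal{S}_E$ on $\partial E$ and $\theta^F$ of $\mathcal{S}_F$ on $\partial F$ are continuously orbit equivalent.
   Context: For a directed graph $E$: finite paths $\mu=\mu_1\cdots\mu_n$ with $r(\mu_i)=s(\mu_{i+1})$, $E^\star$ finite paths (including vertices, with $s(v)=r(v)=v$), $E^\infty$ infinite paths; singular vertex = sink or infinite emitter; $\partial E=E^\infty\cup\{\mu\in E^\star:r(\mu)\text{ singular}\}$, $\partial E^{\ge n}$ its paths of length $\ge n$; $Z(\mu)=\{\mu x:x\in\partial E,s(x)=r(\mu)\}$; the sets $Z(\mu)\setminus\bigcup_{e\in F}Z(\mu e)$ ($F\subseteq s^{-1}(r(\mu))$ finite) form a basis of the topology of $\partial E$. Shift $\sigma_E:\partial E^{\ge1}\to\partial E$: $\sigma_E(x)=r(x)$ if $|x|=1$, $\sigma_E(x_1x_2\cdots)=x_2\cdots$ if $|x|\ge2$; $\sigma_E^0=\mathrm{id}$. $E$ and $F$ are continuously orbit equivalent if there are a homeomorphism $\varphi:\partial E\to\partial F$ and continuous maps $k,l:\partial E^{\ge1}\to\mathbb{N}$, $k',l':\partial F^{\ge1}\to\mathbb{N}$ with $\sigma_F^{k(x)}(\varphi(\sigma_E(x)))=\sigma_F^{l(x)}(\varphi(x))$ for all $x\in\partial E^{\ge1}$ and $\sigma_E^{k'(y)}(\varphi^{-1}(\sigma_F(y)))=\sigma_E^{l'(y)}(\varphi^{-1}(y))$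 for all $y\in\partial F^{\ge1}$. $\mathcal{S}_E=\{(\mu,\nu)\in E^\star\times E^\star:r(\mu)=r(\nu)\}\cup\{0\}$, $0$ absorbing, $(\mu,\nu)(\zeta,\eta)=(\mu,\eta\gamma)$ if $\nu=\zeta\gamma$, $(\mu\gamma,\eta)$ if $\zeta=\nu\gamma$, else $0$. Canonical action $\theta^E$: $\theta_{(\mu,\nu)}:Z(\nu)\to Z(\mu)$, $\nu x\mapsto\mu x$, $\theta_0$ empty. Two topological partial actions $\theta$ of $S$ on $X$ and $\gamma$ of $T$ on $Y$ (with $\theta_s$ defined on $X_{s^*}$) are continuously orbit equivalent if there are a homeomorphism $\varphi:X\to Y$ and continuous maps $a:S*X\to T$, $b:T*Y\to S$, where $S*X=\{(s,x):x\in X_{s^*}\}\subseteq S\times X$ and $S,T$ are discrete, such that $a(s,x)$ is defined at $\varphi(x)$, $b(t,y)$ at $\varphi^{-1}(y)$, $\varphi(\theta_s(x))=\gamma_{a(s,x)}(\varphi(x))$ and $\varphi^{-1}(\gamma_t(y))=\theta_{b(t,y)}(\varphi^{-1}(y))$. *)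

theory Defs
  imports "HOL-Analysis.Analysis"
begin

record ('v, 'e) dgraph =
  verts :: "'v set"
  edges :: "'e set"
  src   :: "'e \<Rightarrow> 'v"
  rng   :: "'e \<Rightarrow> 'v"

definition wf_graph :: "('v, 'e) dgraph \<Rightarrow> bool" where
  "wf_graph E \<longleftrightarrow> (\<forall>e\<in>edges E. src E e \<in> verts E \<and> rng E e \<in> verts E)"

text \<open>A finite path is a pair (v, es): v is its source vertex and es its list of edges.
  Paths of length 0 are the vertices (v, []).\<close>

definition fpaths :: "('v, 'e) dgraph \<Rightarrow> ('v \<times> 'e list) set" where
  "fpaths E = {(v, es). v \<in> verts E \<and> set es \<subseteq> edges E
      \<and> (es \<noteq> [] \<longrightarrow> src E (hd es) = v)
      \<and> (\<forall>i. Suc i < length es \<longrightarrow> rng E (es ! i) = src E (es ! Suc i))}"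

definition prange :: "('v, 'e) dgraph \<Rightarrow> 'v \<times> 'e list \<Rightarrow> 'v" where
  "prange E \<mu> = (if snd \<mu> = [] then fst \<mu> else rng E (last (snd \<mu>)))"

definition ipaths :: "('v, 'e) dgraph \<Rightarrow> (nat \<Rightarrow> 'e) set" where
  "ipaths E = {x. (\<forall>i. x i \<in> edges E) \<and> (\<forall>i. rng E (x i) = src E (x (Suc i)))}"

definition singular :: "('v, 'e) dgraph \<Rightarrow> 'v \<Rightarrow> bool" where
  "singular E v \<longleftrightarrow> {e \<in> edges E. src E e = v} = {} \<or> infinite {e \<in> edges E. src E e = v}"

datatype ('v, 'e) bpath = Fin 'v "'e list" | Inf "nat \<Rightarrow> 'e"

definition bdry :: "('v, 'e) dgraph \<Rightarrow> ('v, 'e) bpath set" where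
  "bdry E = {Fin v es | v es. (v, es) \<in> fpaths E \<and> singular E (prange E (v, es))}
          \<union> {Inf x | x. x \<in> ipaths E}"

fun blen :: "('v, 'e) bpath \<Rightarrow> enat" where
  "blen (Fin v es) = enat (length es)"
| "blen (Inf x) = \<infinity>"

definition bdry_ge :: "('v, 'e) dgraph \<Rightarrow> nat \<Rightarrow> ('v, 'e) bpath set" where
  "bdry_ge E n = {x \<in> bdry E. enat n \<le> blen x}"

fun bsrc :: "('v, 'e) dgraph \<Rightarrow> ('v, 'e) bpath \<Rightarrow> 'v" where
  "bsrc E (Fin v es) = v"
| "bsrc E (Inf x) = src E (x 0)"

fun pcat :: "'v \<times> 'e list \<Rightarrow> ('v, 'e) bpath \<Rightarrow> ('v, 'e) bpath" where
  "pcat (v, es) (Fin w fs) = Fin v (es @ fs)"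
| "pcat (v, es) (Inf x) = Inf (\<lambda>i. if i < length es then es ! i else x (i - length es))"

definition cyl :: "('v, 'e) dgraph \<Rightarrow> 'v \<times> 'e list \<Rightarrow> ('v, 'e) bpath set" where
  "cyl E \<mu> = {pcat \<mu> x | x. x \<in> bdry E \<and> bsrc E x = prange E \<mu>}"

definition bdry_basis :: "('v, 'e) dgraph \<Rightarrow> ('v, 'e) bpath set set" where
  "bdry_basis E = {cyl E \<mu> - (\<Union>e\<in>G. cyl E (fst \<mu>, snd \<mu> @ [e])) | \<mu> G.
      \<mu> \<in> fpaths E \<and> finite G \<and> G \<subseteq> {e \<in> edges E. src E e = prange E \<mu>}}"

definition bdry_top :: "('v, 'e) dgraph \<Rightarrow> ('v, 'e) bpath topology" where
  "bdry_top E = topology_generated_by (bdry_basis E)"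

text \<open>The shift map (only meaningful on paths of length at least 1;
  on vertices it is the identity, a value never used below).\<close>
fun shift :: "('v, 'e) dgraph \<Rightarrow> ('v, 'e) bpath \<Rightarrow> ('v, 'e) bpath" where
  "shift E (Fin v []) = Fin v []"
| "shift E (Fin v (e # es)) = Fin (rng E e) es"
| "shift E (Inf x) = Inf (\<lambda>i. x (Suc i))"

definition graph_coe :: "('v, 'e) dgraph \<Rightarrow> ('w, 'f) dgraph \<Rightarrow> bool" where
  "graph_coe E F \<longleftrightarrow> (\<exists>\<phi> \<psi> k l k' l'.
     homeomorphic_maps (bdry_top E) (bdry_top F) \<phi> \<psi>
   \<and> continuous_map (subtopology (bdry_top E) (bdry_ge E 1)) (discrete_topology UNIV) (k :: _ \<Rightarrow> nat)
   \<and> continuous_map (subtopology (bdry_top E) (bdry_ge E 1)) (discrete_topology UNIV) (l :: _ \<Rightarrow> nat)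
   \<and> continuous_map (subtopology (bdry_top F) (bdry_ge F 1)) (discrete_topology UNIV) (k' :: _ \<Rightarrow> nat)
   \<and> continuous_map (subtopology (bdry_top F) (bdry_ge F 1)) (discrete_topology UNIV) (l' :: _ \<Rightarrow> nat)
   \<and> (\<forall>x \<in> bdry_ge E 1.
        enat (k x) \<le> blen (\<phi> (shift E x)) \<and> enat (l x) \<le> blen (\<phi> x)
      \<and> (shift F ^^ k x) (\<phi> (shift E x)) = (shift F ^^ l x) (\<phi> x))
   \<and> (\<forall>y \<in> bdry_ge F 1.
        enat (k' y) \<le> blen (\<psi> (shift F y)) \<and> enat (l' y) \<le> blen (\<psi> y)
      \<and> (shift E ^^ k' y) (\<psi> (shift F y)) = (shift E ^^ l' y) (\<psi> y)))"

text \<open>A partial action is given by an index set S (discrete), a space X, the domains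
  dom s (= X_{s*}, the domain of theta_s) and the maps theta s.\<close>

definition action_coe ::
  "'s set \<Rightarrow> 'x topology \<Rightarrow> ('s \<Rightarrow> 'x set) \<Rightarrow> ('s \<Rightarrow> 'x \<Rightarrow> 'x) \<Rightarrow>
   't set \<Rightarrow> 'y topology \<Rightarrow> ('t \<Rightarrow> 'y set) \<Rightarrow> ('t \<Rightarrow> 'y \<Rightarrow> 'y) \<Rightarrow> bool" where
  "action_coe S X domS \<theta> T Y domT \<gamma> \<longleftrightarrow> (\<exists>\<phi> \<psi> a b.
     homeomorphic_maps X Y \<phi> \<psi>
   \<and> continuous_map (subtopology (prod_topology (discrete_topology S) X) {(s, x). s \<in> S \<and> x \<in> domS s})
       (discrete_topology T) a
   \<and> continuous_map (subtopology (prod_topology (discrete_topology T) Y) {(t, y). t \<in> T \<and> y \<in> domT t})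
       (discrete_topology S) b
   \<and> (\<forall>s \<in> S. \<forall>x \<in> domS s. \<phi> x \<in> domT (a (s, x)) \<and> \<phi> (\<theta> s x) = \<gamma> (a (s, x)) (\<phi> x))
   \<and> (\<forall>t \<in> T. \<forall>y \<in> domT t. \<psi> y \<in> domS (b (t, y)) \<and> \<psi> (\<gamma> t y) = \<theta> (b (t, y)) (\<psi> y)))"

text \<open>None stands for 0, Some (mu, nu) for (mu, nu).\<close>
definition graph_semigroup :: "('v, 'e) dgraph \<Rightarrow> (('v \<times> 'e list) \<times> ('v \<times> 'e list)) option set" where
  "graph_semigroup E = {None} \<union>
     {Some (\<mu>, \<nu>) | \<mu> \<nu>. \<mu> \<in> fpaths E \<and> \<nu> \<in> fpaths E \<and> prange E \<mu> = prange E \<nu>}"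

fun can_dom :: "('v, 'e) dgraph \<Rightarrow> (('v \<times> 'e list) \<times> ('v \<times> 'e list)) option \<Rightarrow> ('v, 'e) bpath set" where
  "can_dom E None = {}"
| "can_dom E (Some (\<mu>, \<nu>)) = cyl E \<nu>"

fun can_act :: "('v, 'e) dgraph \<Rightarrow> (('v \<times> 'e list) \<times> ('v \<times> 'e list)) option \<Rightarrow> ('v, 'e) bpath \<Rightarrow> ('v, 'e) bpath" where
  "can_act E None x = x"
| "can_act E (Some (\<mu>, \<nu>)) x =
     (THE z. \<exists>y. y \<in> bdry E \<and> bsrc E y = prange E \<nu> \<and> x = pcat \<nu> y \<and> z = pcat \<mu> y)"

end

theory Submission
  imports Defs
begin

text \<open>Both notions of orbit equivalence consist of a homeomorphism \<open>\<phi>\<close> of the boundary path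
  spaces together with locally constant cocycle data; the proof translates the cocycles.
  Given lags with \<open>\<sigma>\<^sup>k (\<phi> (\<sigma> x)) = \<sigma>\<^sup>l (\<phi> x)\<close>, composing them along the orbit makes
  \<open>\<phi> x\<close> and \<open>\<phi> (\<sigma>\<^sup>n x)\<close> tail equivalent with locally constant lags. The canonical action of
  \<open>(\<mu>, \<nu>)\<close> sends \<open>\<nu> z\<close> to \<open>\<mu> z\<close>, so \<open>\<phi> (\<nu> z)\<close> and \<open>\<phi> (\<mu> z)\<close> are both tail equivalent to
  \<open>\<phi> z\<close>, and the two prefixes cut off in front of a common tail form the required element of
  \<open>S\<^sub>F\<close>. Conversely, \<open>\<sigma>\<close> is the canonical action of the locally constant element
  \<open>(r(x\<^sub>1), x\<^sub>1)\<close>, and an element \<open>(\<mu>', \<nu>')\<close> of \<open>S\<^sub>F\<close> moving \<open>\<phi> x\<close> to \<open>\<phi> (\<sigma> x)\<close> yields the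
  lags \<open>|\<mu>'|\<close> and \<open>|\<nu>'|\<close>. All continuity questions reduce to local constancy, tested on the
  basic neighbourhoods of paths sharing a prefix with \<open>x\<close> and avoiding finitely many next edges.\<close>

section \<open>Locally constant maps\<close>

definition locally_constant :: "'a topology \<Rightarrow> ('a \<Rightarrow> 'b) \<Rightarrow> bool" where
  "locally_constant X f \<longleftrightarrow> (\<forall>x\<in>topspace X. \<exists>U. openin X U \<and> x \<in> U \<and> (\<forall>y\<in>U. f y = f x))"

lemma continuous_map_discrete_topology_iff:
  "continuous_map X (discrete_topology T) f \<longleftrightarrow> f ` topspace X \<subseteq> T \<and> locally_constant X f"
proof
  assume c: "continuous_map X (discrete_topology T) f"
  have im: "f ` topspace X \<subseteq> T" using continuous_map_image_subset_topspace[OF c] by simp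
  have "locally_constant X f" unfolding locally_constant_def
  proof
    fix x assume x: "x \<in> topspace X"
    have "f x \<in> T" using im x by blast
    moreover have "\<forall>U\<subseteq>T. openin X {y \<in> topspace X. f y \<in> U}" using c
      unfolding continuous_map_def by simp
    ultimately have "openin X {y \<in> topspace X. f y \<in> {f x}}" by blast
    then show "\<exists>U. openin X U \<and> x \<in> U \<and> (\<forall>y\<in>U. f y = f x)" using x
      by (intro exI[of _ "{y \<in> topspace X. f y \<in> {f x}}"]) simp
  qed
  then show "f ` topspace X \<subseteq> T \<and> locally_constant X f" using im by simp
next
  assume a: "f ` topspace X \<subseteq> T \<and> locally_constant X f"
  show "continuous_map X (discrete_topology T) f"
    unfolding continuous_map_def
  proof (intro conjI allI impI)
    show "f \<in> topspace X \<rightarrow> topspace (discrete_topology T)" using a by (simp add: image_subset_iff_funcset)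
    fix U assume "openin (discrete_topology T) U"
    show "openin X {x \<in> topspace X. f x \<in> U}"
    proof (subst openin_subopen, intro ballI)
      fix x assume x: "x \<in> {x \<in> topspace X. f x \<in> U}"
      then obtain V where V: "openin X V" "x \<in> V" "\<forall>y\<in>V. f y = f x"
        using a unfolding locally_constant_def by blast
      have "V \<subseteq> topspace X" using openin_subset[OF V(1)] .
      then have "V \<subseteq> {x \<in> topspace X. f x \<in> U}" using V(3) x by auto
      then show "\<exists>T. openin X T \<and> x \<in> T \<and> T \<subseteq> {x \<in> topspace X. f x \<in> U}"
        using V by blast
    qed
  qed
qed

lemma locally_constant_subtopology:
  assumes "locally_constant X f"
  shows "locally_constant (subtopology X S) f"
  unfolding locally_constant_def
proof
  fix x assume "x \<in> topspace (subtopology X S)"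
  then have x: "x \<in> topspace X" "x \<in> S" by auto
  then obtain U where U: "openin X U" "x \<in> U" "\<forall>y\<in>U. f y = f x"
    using assms unfolding locally_constant_def by blast
  have "openin (subtopology X S) (U \<inter> S)"
    using U(1) by (rule openin_subtopology_Int)
  then show "\<exists>U. openin (subtopology X S) U \<and> x \<in> U \<and> (\<forall>y\<in>U. f y = f x)"
    using x(2) U(2,3) by blast
qed

lemma locally_constant_subtopology_mono:
  assumes "locally_constant (subtopology X S) f" "T \<subseteq> S"
  shows "locally_constant (subtopology X T) f"
  using locally_constant_subtopology[OF assms(1), of T] assms(2)
  by (simp add: subtopology_subtopology Int_absorb1)

lemma locally_constant_compose:
  assumes g: "continuous_map X Y g" and f: "locally_constant Y f"
  shows "locally_constant X (\<lambda>x. f (g x))"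
  unfolding locally_constant_def
proof
  fix x assume x: "x \<in> topspace X"
  then have "g x \<in> topspace Y"
    using continuous_map_image_subset_topspace[OF g] by blast
  then obtain U where U: "openin Y U" "g x \<in> U" "\<forall>y\<in>U. f y = f (g x)"
    using f unfolding locally_constant_def by blast
  have "openin X {x \<in> topspace X. g x \<in> U}"
    using g U(1) by (simp add: continuous_map_def)
  then show "\<exists>V. openin X V \<and> x \<in> V \<and> (\<forall>y\<in>V. f (g y) = f (g x))"
    using x U(2,3) by blast
qed

lemma locally_constant_const: "locally_constant X (\<lambda>x. c)"
  unfolding locally_constant_def
proof
  fix x assume "x \<in> topspace X"
  then show "\<exists>U. openin X U \<and> x \<in> U \<and> (\<forall>y\<in>U. c = c)" using openin_topspace[of X] by blast
qed

lemma locally_constant_combine: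
  assumes "locally_constant X f" "locally_constant X g" shows "locally_constant X (\<lambda>x. h (f x) (g x))"
  unfolding locally_constant_def
proof
  fix x assume x: "x \<in> topspace X"
  obtain U where U: "openin X U" "x \<in> U" "\<forall>y\<in>U. f y = f x" using assms(1) x unfolding locally_constant_def by blast
  obtain V where V: "openin X V" "x \<in> V" "\<forall>y\<in>V. g y = g x" using assms(2) x unfolding locally_constant_def by blast
  have "openin X (U \<inter> V)" using U(1) V(1) by (rule openin_Int)
  moreover have "x \<in> U \<inter> V" using U V by blast
  moreover have "\<forall>y\<in>U \<inter> V. h (f y) (g y) = h (f x) (g x)" using U(3) V(3) by simp
  ultimately show "\<exists>U. openin X U \<and> x \<in> U \<and> (\<forall>y\<in>U. h (f y) (g y) = h (f x) (g x))" by blast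
qed

lemma locally_constant_prod_discrete:
  assumes "\<forall>s\<in>S. locally_constant (subtopology X (D s)) (\<lambda>x. a (s, x))"
  shows "locally_constant (subtopology (prod_topology (discrete_topology S) X) {(s, x). s \<in> S \<and> x \<in> D s}) a"
  unfolding locally_constant_def
proof
  let ?P = "{(s, x). s \<in> S \<and> x \<in> D s}"
  fix p assume p: "p \<in> topspace (subtopology (prod_topology (discrete_topology S) X) ?P)"
  obtain s x where sx: "p = (s, x)" by (cases p)
  have s: "s \<in> S" and x: "x \<in> topspace X" "x \<in> D s" using p unfolding sx by simp_all
  then have "locally_constant (subtopology X (D s)) (\<lambda>x. a (s, x))" using assms by blast
  moreover have "x \<in> topspace (subtopology X (D s))" using x by simp
  ultimately obtain U where U: "openin (subtopology X (D s)) U" "x \<in> U" "\<forall>y\<in>U. a (s, y) = a (s, x)"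
    unfolding locally_constant_def by blast
  then obtain T where T: "openin X T" "U = T \<inter> D s" by (meson openin_subtopology)
  have "openin (prod_topology (discrete_topology S) X) ({s} \<times> T)"
    using s T by (simp add: openin_prod_Times_iff)
  then have o: "openin (subtopology (prod_topology (discrete_topology S) X) ?P) (({s} \<times> T) \<inter> ?P)"
    by (rule openin_subtopology_Int)
  have "p \<in> ({s} \<times> T) \<inter> ?P" using sx s x U(2) T(2) by blast
  moreover have "\<forall>y\<in>({s} \<times> T) \<inter> ?P. a y = a p"
  proof
    fix y assume "y \<in> ({s} \<times> T) \<inter> ?P"
    then obtain z where z: "y = (s, z)" "z \<in> T" "z \<in> D s" by blast
    then have "z \<in> U" using T(2) by blast
    then show "a y = a p" using U(3) z(1) sx by simp
  qed
  ultimately show "\<exists>U. openin (subtopology (prod_topology (discrete_topology S) X) ?P) U \<and> p \<in> U \<and> (\<forall>y\<in>U. a y = a p)"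
    using o by blast
qed

lemma locally_constant_map:
  "locally_constant X f \<Longrightarrow> locally_constant X (\<lambda>x. h (f x))"
  using locally_constant_combine[of X f f "\<lambda>a b. h a"] by simp


primrec edge_at :: "('v, 'e) bpath \<Rightarrow> nat \<Rightarrow> 'e option" where
  "edge_at (Fin v es) i = (if i < length es then Some (es ! i) else None)"
| "edge_at (Inf x) i = Some (x i)"

lemma edge_at_Fin_eq_iff:
  "edge_at (Fin v es) = edge_at (Fin w fs) \<longleftrightarrow> es = fs"
proof
  assume e: "edge_at (Fin v es) = edge_at (Fin w fs)"
  have "length es = length fs"
    using fun_cong[OF e, of "length es"] fun_cong[OF e, of "length fs"]
    by (auto split: if_splits)
  moreover have "es ! i = fs ! i" if "i < length es" for i
    using fun_cong[OF e, of i] that \<open>length es = length fs\<close> by simp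
  ultimately show "es = fs" by (rule nth_equalityI)
qed (simp add: fun_eq_iff)

lemma bpath_eqI:
  assumes "bsrc E x = bsrc E y" "edge_at x = edge_at y"
  shows "x = y"
proof (cases x; cases y)
  fix v es w fs assume "x = Fin v es" "y = Fin w fs"
  then show ?thesis using assms by (simp add: edge_at_Fin_eq_iff)
next
  fix v es z assume "x = Fin v es" "y = Inf z"
  then show ?thesis using fun_cong[OF assms(2), of "length es"] by simp
next
  fix z w fs assume "x = Inf z" "y = Fin w fs"
  then show ?thesis using fun_cong[OF assms(2), of "length fs"] by simp
next
  fix z z' assume "x = Inf z" "y = Inf z'"
  then show ?thesis using assms(2) by (simp add: fun_eq_iff)
qed

lemma edge_at_shift: "edge_at (shift E x) i = edge_at x (Suc i)"
proof (cases x)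
  case (Fin v es) then show ?thesis by (cases es) auto
next
  case (Inf z) then show ?thesis by simp
qed

lemma edge_at_funpow_shift: "edge_at ((shift E ^^ n) x) i = edge_at x (n + i)"
  by (induction n arbitrary: i) (simp_all add: edge_at_shift)

lemma enat_le_blen_iff: "enat n \<le> blen x \<longleftrightarrow> (\<forall>i<n. edge_at x i \<noteq> None)"
proof (cases x)
  case (Fin v es)
  have "(n \<le> length es) \<longleftrightarrow> (\<forall>i<n. i < length es)"
  proof
    assume "\<forall>i<n. i < length es" then show "n \<le> length es"
      by (cases n) auto
  qed auto
  moreover have "(\<forall>i<n. edge_at x i \<noteq> None) \<longleftrightarrow> (\<forall>i<n. i < length es)" using Fin by (simp; blast)
  moreover have "enat n \<le> blen x \<longleftrightarrow> n \<le> length es" using Fin by simp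
  ultimately show ?thesis by blast
qed simp

lemma enat_add_le_blen_iff: "enat (m + n) \<le> blen x \<longleftrightarrow> enat n \<le> blen x \<and> enat m \<le> blen ((shift E ^^ n) x)"
proof -
  have "(\<forall>i<m + n. edge_at x i \<noteq> None) \<longleftrightarrow> (\<forall>i<n. edge_at x i \<noteq> None) \<and> (\<forall>i<m. edge_at x (n + i) \<noteq> None)"
  proof
    assume a: "\<forall>i<m + n. edge_at x i \<noteq> None"
    show "(\<forall>i<n. edge_at x i \<noteq> None) \<and> (\<forall>i<m. edge_at x (n + i) \<noteq> None)"
      using a by simp
  next
    assume a: "(\<forall>i<n. edge_at x i \<noteq> None) \<and> (\<forall>i<m. edge_at x (n + i) \<noteq> None)"
    show "\<forall>i<m + n. edge_at x i \<noteq> None"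
    proof (intro allI impI)
      fix i assume "i < m + n"
      show "edge_at x i \<noteq> None"
      proof (cases "i < n")
        case True then show ?thesis using a by simp
      next
        case False
        then have "i = n + (i - n)" "i - n < m" using \<open>i < m + n\<close> by linarith+
        then show ?thesis using a by metis
      qed
    qed
  qed
  then show ?thesis by (simp add: enat_le_blen_iff edge_at_funpow_shift)
qed

lemma enat_add_le_blenI: "enat n \<le> blen x \<Longrightarrow> enat m \<le> blen ((shift E ^^ n) x) \<Longrightarrow> enat (m + n) \<le> blen x"
  using enat_add_le_blen_iff by blast

definition vertex_at :: "('v, 'e) dgraph \<Rightarrow> ('v, 'e) bpath \<Rightarrow> nat \<Rightarrow> 'v" where
  "vertex_at E x n = (if n = 0 then bsrc E x else rng E (the (edge_at x (n - 1))))"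

text \<open>A description of \<open>\<partial>E\<close> through edge sequences that treats finite and infinite paths
  alike; \<open>vertex_at E x n\<close> is the vertex reached after \<open>n\<close> edges.\<close>

definition is_bdry_path :: "('v, 'e) dgraph \<Rightarrow> ('v, 'e) bpath \<Rightarrow> bool" where
  "is_bdry_path E x \<longleftrightarrow> (\<forall>i e. edge_at x i = Some e \<longrightarrow> e \<in> edges E)
    \<and> (\<forall>e. edge_at x 0 = Some e \<longrightarrow> src E e = bsrc E x)
    \<and> (\<forall>i e e'. edge_at x i = Some e \<longrightarrow> edge_at x (Suc i) = Some e' \<longrightarrow> rng E e = src E e')
    \<and> bsrc E x \<in> verts E
    \<and> (\<forall>n. edge_at x n = None \<longrightarrow> (\<forall>i<n. edge_at x i \<noteq> None) \<longrightarrow> singular E (vertex_at E x n))"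

lemma bdry_Fin_iff:
  "Fin v es \<in> bdry E \<longleftrightarrow> (v, es) \<in> fpaths E \<and> singular E (prange E (v, es))"
  unfolding bdry_def by auto

lemma bdry_Inf_iff:
  "Inf x \<in> bdry E \<longleftrightarrow> x \<in> ipaths E"
  unfolding bdry_def by auto

lemma is_bdry_path_Fin:
  "is_bdry_path E (Fin v es) \<longleftrightarrow> (v, es) \<in> fpaths E \<and> singular E (prange E (v, es))"
proof -
  let ?x = "Fin v es"
  have end1: "(\<forall>n. edge_at ?x n = None \<longrightarrow> (\<forall>i<n. edge_at ?x i \<noteq> None) \<longrightarrow> singular E (vertex_at E ?x n))
      \<longleftrightarrow> singular E (prange E (v, es))"
  proof -
    have "edge_at ?x n = None \<and> (\<forall>i<n. edge_at ?x i \<noteq> None) \<longleftrightarrow> n = length es" for n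
      by (auto simp: not_less)
    moreover have "vertex_at E ?x (length es) = prange E (v, es)"
      by (cases es rule: rev_cases) (auto simp: vertex_at_def prange_def nth_append)
    ultimately show ?thesis by metis
  qed
  have edg: "(\<forall>i e. edge_at ?x i = Some e \<longrightarrow> e \<in> edges E) \<longleftrightarrow> set es \<subseteq> edges E"
    unfolding subset_iff in_set_conv_nth by auto
  have hd1: "(\<forall>e. edge_at ?x 0 = Some e \<longrightarrow> src E e = bsrc E ?x) \<longleftrightarrow> (es \<noteq> [] \<longrightarrow> src E (hd es) = v)"
    by (cases es) auto
  have ch: "(\<forall>i e e'. edge_at ?x i = Some e \<longrightarrow> edge_at ?x (Suc i) = Some e' \<longrightarrow> rng E e = src E e')
      \<longleftrightarrow> (\<forall>i. Suc i < length es \<longrightarrow> rng E (es ! i) = src E (es ! Suc i))"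
    by auto
  show ?thesis unfolding is_bdry_path_def fpaths_def using end1 edg hd1 ch by auto
qed

lemma is_bdry_path_Inf:
  assumes "wf_graph E"
  shows "is_bdry_path E (Inf x) \<longleftrightarrow> x \<in> ipaths E"
proof
  assume "is_bdry_path E (Inf x)"
  then show "x \<in> ipaths E" unfolding is_bdry_path_def ipaths_def by auto
next
  assume a: "x \<in> ipaths E"
  then have "src E (x 0) \<in> verts E" using assms unfolding wf_graph_def ipaths_def by blast
  then show "is_bdry_path E (Inf x)" using a unfolding is_bdry_path_def ipaths_def by auto
qed

lemma bdry_iff_is_bdry_path: "wf_graph E \<Longrightarrow> x \<in> bdry E \<longleftrightarrow> is_bdry_path E x"
  by (cases x) (simp_all add: bdry_Fin_iff is_bdry_path_Fin bdry_Inf_iff is_bdry_path_Inf)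

lemma bsrc_shift:
  assumes "is_bdry_path E x" "edge_at x 0 = Some e"
  shows "bsrc E (shift E x) = rng E e"
proof (cases x)
  case (Fin v es)
  then show ?thesis using assms(2) by (cases es) auto
next
  case (Inf z)
  then show ?thesis using assms unfolding is_bdry_path_def by (metis bsrc.simps(2) edge_at.simps(2) shift.simps(3))
qed

lemma is_bdry_path_shift:
  assumes wf: "wf_graph E" and b: "is_bdry_path E x"
  shows "is_bdry_path E (shift E x)"
proof (cases "edge_at x 0")
  case None
  then obtain v where "x = Fin v []" by (cases x) (auto split: if_splits)
  then show ?thesis using b by simp
next
  case (Some e0)
  have bs: "bsrc E (shift E x) = rng E e0" using bsrc_shift[OF b Some] .
  have e0: "e0 \<in> edges E" using b Some unfolding is_bdry_path_def by blast
  have v: "rng E e0 \<in> verts E" using wf e0 unfolding wf_graph_def by blast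
  have be: "vertex_at E (shift E x) n = vertex_at E x (Suc n)" for n
    using bs Some by (simp add: vertex_at_def edge_at_shift)
  show ?thesis
    unfolding is_bdry_path_def
  proof (intro conjI allI impI)
    show "e \<in> edges E" if "edge_at (shift E x) i = Some e" for i e
      using b that unfolding is_bdry_path_def edge_at_shift by blast
    show "src E e = bsrc E (shift E x)" if "edge_at (shift E x) 0 = Some e" for e
      using b that Some bs unfolding is_bdry_path_def edge_at_shift by metis
    show "rng E e = src E e'" if "edge_at (shift E x) i = Some e" "edge_at (shift E x) (Suc i) = Some e'" for i e e'
      using b that unfolding is_bdry_path_def edge_at_shift by blast
    show "bsrc E (shift E x) \<in> verts E" using bs v by simp
    show "singular E (vertex_at E (shift E x) n)"
      if "edge_at (shift E x) n = None" "\<forall>i<n. edge_at (shift E x) i \<noteq> None" for n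
    proof -
      have "edge_at x (Suc n) = None" using that(1) by (simp add: edge_at_shift)
      moreover have "\<forall>i<Suc n. edge_at x i \<noteq> None"
      proof (intro allI impI)
        fix i assume "i < Suc n"
        then show "edge_at x i \<noteq> None" using that(2) Some
          by (cases i) (auto simp: edge_at_shift)
      qed
      ultimately show ?thesis using b be unfolding is_bdry_path_def by metis
    qed
  qed
qed

lemma is_bdry_path_funpow_shift: "wf_graph E \<Longrightarrow> is_bdry_path E x \<Longrightarrow> is_bdry_path E ((shift E ^^ n) x)"
  by (induction n) (simp_all add: is_bdry_path_shift)

lemma bsrc_funpow_shift:
  assumes "wf_graph E" "is_bdry_path E x" "edge_at x n = Some e"
  shows "bsrc E ((shift E ^^ Suc n) x) = rng E e"
proof -
  have "is_bdry_path E ((shift E ^^ n) x)" using is_bdry_path_funpow_shift assms(1,2) by blast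
  moreover have "edge_at ((shift E ^^ n) x) 0 = Some e" using assms(3) by (simp add: edge_at_funpow_shift)
  ultimately show ?thesis using bsrc_shift by simp
qed

lemma edge_at_pcat: "edge_at (pcat (v, es) z) i = (if i < length es then Some (es ! i) else edge_at z (i - length es))"
  by (cases z) (auto simp: nth_append)

lemma bsrc_pcat:
  assumes "es \<noteq> [] \<longrightarrow> src E (hd es) = v" "es = [] \<longrightarrow> bsrc E z = v"
  shows "bsrc E (pcat (v, es) z) = v"
proof (cases z)
  case (Fin w fs) then show ?thesis by simp
next
  case (Inf y)
  then show ?thesis using assms by (cases es) auto
qed

lemma pcat_Nil: "bsrc E z = v \<Longrightarrow> pcat (v, []) z = z"
  by (cases z) auto

lemma fpathsD:
  assumes "(v, es) \<in> fpaths E"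
  shows "v \<in> verts E" "set es \<subseteq> edges E" "es \<noteq> [] \<Longrightarrow> src E (hd es) = v"
    "Suc i < length es \<Longrightarrow> rng E (es ! i) = src E (es ! Suc i)"
  using assms unfolding fpaths_def by auto

lemma bsrc_pcat_fpaths:
  assumes p: "(v, es) \<in> fpaths E" and s: "bsrc E z = prange E (v, es)"
  shows "bsrc E (pcat (v, es) z) = v"
  by (rule bsrc_pcat) (use fpathsD(3)[OF p] s in \<open>auto simp: prange_def\<close>)

lemma edge_at_pcat_first_None:
  assumes "edge_at (pcat (v, es) z) n = None" "\<forall>i<n. edge_at (pcat (v, es) z) i \<noteq> None"
  shows "length es \<le> n" "edge_at z (n - length es) = None" "\<forall>i<n - length es. edge_at z i \<noteq> None"
proof -
  show n: "length es \<le> n" using assms(1) by (auto simp: edge_at_pcat split: if_splits)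
  then show "edge_at z (n - length es) = None" using assms(1) by (simp add: edge_at_pcat)
  show "\<forall>i<n - length es. edge_at z i \<noteq> None"
  proof (intro allI impI)
    fix i assume "i < n - length es"
    then have "i + length es < n" by simp
    then show "edge_at z i \<noteq> None"
      using assms(2) by (auto simp: edge_at_pcat dest!: spec[of _ "i + length es"])
  qed
qed

lemma vertex_at_pcat:
  assumes p: "(v, es) \<in> fpaths E" and s: "bsrc E z = prange E (v, es)" and n: "length es \<le> n"
  shows "vertex_at E (pcat (v, es) z) n = vertex_at E z (n - length es)"
proof (cases "n = length es")
  case True
  then show ?thesis using s bsrc_pcat_fpaths[OF p s]
    by (cases "es = []") (auto simp: vertex_at_def edge_at_pcat prange_def last_conv_nth)
next
  case False
  then have "n - length es - 1 = n - 1 - length es" "\<not> n - 1 < length es" "n \<noteq> 0" "n - length es \<noteq> 0"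
    using n by auto
  then show ?thesis using False by (simp add: vertex_at_def edge_at_pcat)
qed

lemma prange_conv_nth: "es \<noteq> [] \<Longrightarrow> prange E (v, es) = rng E (es ! (length es - 1))"
  by (simp add: prange_def last_conv_nth)

lemma edge_chain_pcat:
  assumes p: "(v, es) \<in> fpaths E" and z: "is_bdry_path E z" and s: "bsrc E z = prange E (v, es)"
    and e: "edge_at (pcat (v, es) z) i = Some e" "edge_at (pcat (v, es) z) (Suc i) = Some e'"
  shows "rng E e = src E e'"
proof -
  consider "Suc i < length es" | "Suc i = length es" | "length es \<le> i" by linarith
  then show ?thesis
  proof cases
    case 1 then show ?thesis using e fpathsD(4)[OF p] by (auto simp: edge_at_pcat)
  next
    case 2
    then have "e = es ! i" "i = length es - 1" "es \<noteq> []" "edge_at z 0 = Some e'"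
      using e by (auto simp: edge_at_pcat)
    then show ?thesis using z s prange_conv_nth[of es E v] unfolding is_bdry_path_def by simp
  next
    case 3
    then have "edge_at z (i - length es) = Some e" "edge_at z (Suc (i - length es)) = Some e'" using e
      by (auto simp: edge_at_pcat Suc_diff_le)
    then show ?thesis using z unfolding is_bdry_path_def by blast
  qed
qed

lemma is_bdry_path_pcat:
  assumes p: "(v, es) \<in> fpaths E" and z: "is_bdry_path E z" and s: "bsrc E z = prange E (v, es)"
  shows "is_bdry_path E (pcat (v, es) z)"
proof -
  let ?y = "pcat (v, es) z"
  let ?L = "length es"
  have bs: "bsrc E ?y = v" using bsrc_pcat_fpaths[OF p s] .
  show ?thesis
    unfolding is_bdry_path_def
  proof (intro conjI allI impI)
    show "e \<in> edges E" if "edge_at ?y i = Some e" for i e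
    proof (cases "i < ?L")
      case True then show ?thesis using that fpathsD(2)[OF p] by (auto simp: edge_at_pcat)
    next
      case False then show ?thesis using that z unfolding is_bdry_path_def by (auto simp: edge_at_pcat)
    qed
    show "src E e = bsrc E ?y" if "edge_at ?y 0 = Some e" for e
    proof (cases "es = []")
      case True then show ?thesis using that z s bs unfolding is_bdry_path_def by (auto simp: edge_at_pcat prange_def)
    next
      case False then show ?thesis using that fpathsD(3)[OF p] bs by (auto simp: edge_at_pcat hd_conv_nth)
    qed
    show "rng E e = src E e'" if "edge_at ?y i = Some e" "edge_at ?y (Suc i) = Some e'" for i e e'
      using edge_chain_pcat[OF p z s that] .
    show "bsrc E ?y \<in> verts E" using bs fpathsD(1)[OF p] by simp
    show "singular E (vertex_at E ?y n)" if "edge_at ?y n = None" "\<forall>i<n. edge_at ?y i \<noteq> None" for n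
    proof -
      note first_None = edge_at_pcat_first_None[OF that]
      have "singular E (vertex_at E z (n - ?L))"
        using z first_None(2,3) unfolding is_bdry_path_def by blast
      then show ?thesis using vertex_at_pcat[OF p s first_None(1)] by simp
    qed
  qed
qed


section \<open>Prefixes and cylinders\<close>

definition path_prefix :: "('v, 'e) dgraph \<Rightarrow> nat \<Rightarrow> ('v, 'e) bpath \<Rightarrow> 'v \<times> 'e list" where
  "path_prefix E n x = (bsrc E x, map (\<lambda>i. the (edge_at x i)) [0..<n])"

lemma path_prefix_simps [simp]: "length (snd (path_prefix E n x)) = n" "fst (path_prefix E n x) = bsrc E x"
  by (simp_all add: path_prefix_def)

lemma path_prefix_nth: "i < n \<Longrightarrow> snd (path_prefix E n x) ! i = the (edge_at x i)"
  by (simp add: path_prefix_def)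

lemma path_prefix_in_fpaths:
  assumes b: "is_bdry_path E x" and n: "enat n \<le> blen x"
  shows "path_prefix E n x \<in> fpaths E"
proof -
  have S: "\<And>i. i < n \<Longrightarrow> edge_at x i = Some (the (edge_at x i))" using n by (auto simp: enat_le_blen_iff)
  show ?thesis
    unfolding fpaths_def path_prefix_def
  proof (clarify, intro conjI)
    show "bsrc E x \<in> verts E" using b unfolding is_bdry_path_def by blast
    show "set (map (\<lambda>i. the (edge_at x i)) [0..<n]) \<subseteq> edges E"
    proof
      fix e assume "e \<in> set (map (\<lambda>i. the (edge_at x i)) [0..<n])"
      then obtain i where "i < n" "e = the (edge_at x i)" by auto
      then show "e \<in> edges E" using S b unfolding is_bdry_path_def by metis
    qed
    show "map (\<lambda>i. the (edge_at x i)) [0..<n] \<noteq> [] \<longrightarrow> src E (hd (map (\<lambda>i. the (edge_at x i)) [0..<n])) = bsrc E x"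
    proof
      assume "map (\<lambda>i. the (edge_at x i)) [0..<n] \<noteq> []"
      then have "0 < n" by simp
      then have "hd (map (\<lambda>i. the (edge_at x i)) [0..<n]) = the (edge_at x 0)" by (simp add: hd_map)
      then show "src E (hd (map (\<lambda>i. the (edge_at x i)) [0..<n])) = bsrc E x"
        using S[OF \<open>0 < n\<close>] b unfolding is_bdry_path_def by metis
    qed
    show "\<forall>i. Suc i < length (map (\<lambda>i. the (edge_at x i)) [0..<n]) \<longrightarrow>
        rng E (map (\<lambda>i. the (edge_at x i)) [0..<n] ! i) = src E (map (\<lambda>i. the (edge_at x i)) [0..<n] ! Suc i)"
    proof (intro allI impI)
      fix i assume "Suc i < length (map (\<lambda>i. the (edge_at x i)) [0..<n])"
      then have i: "Suc i < n" by simp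
      then have "edge_at x i = Some (the (edge_at x i))" "edge_at x (Suc i) = Some (the (edge_at x (Suc i)))" using S by auto
      then show "rng E (map (\<lambda>i. the (edge_at x i)) [0..<n] ! i) = src E (map (\<lambda>i. the (edge_at x i)) [0..<n] ! Suc i)"
        using i b unfolding is_bdry_path_def by simp
    qed
  qed
qed

lemma prange_path_prefix:
  assumes wf: "wf_graph E" and b: "is_bdry_path E x" and n: "enat n \<le> blen x"
  shows "prange E (path_prefix E n x) = bsrc E ((shift E ^^ n) x)"
proof (cases n)
  case 0 then show ?thesis by (simp add: path_prefix_def prange_def)
next
  case (Suc m)
  then have "edge_at x m = Some (the (edge_at x m))" using n by (auto simp: enat_le_blen_iff)
  then have "bsrc E ((shift E ^^ Suc m) x) = rng E (the (edge_at x m))" using bsrc_funpow_shift[OF wf b] by blast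
  then show ?thesis using Suc by (simp add: path_prefix_def prange_def)
qed

lemma mem_cyl_iff:
  assumes wf: "wf_graph E" and b: "is_bdry_path E x" and h: "es \<noteq> [] \<longrightarrow> src E (hd es) = v"
  shows "x \<in> cyl E (v, es) \<longleftrightarrow> bsrc E x = v \<and> (\<forall>i<length es. edge_at x i = Some (es ! i))"
proof
  assume "x \<in> cyl E (v, es)"
  then obtain z where z: "x = pcat (v, es) z" "z \<in> bdry E" "bsrc E z = prange E (v, es)"
    unfolding cyl_def by blast
  have "bsrc E x = v" unfolding z(1) by (rule bsrc_pcat) (use h z(3) in \<open>auto simp: prange_def\<close>)
  then show "bsrc E x = v \<and> (\<forall>i<length es. edge_at x i = Some (es ! i))" using z(1) by (simp add: edge_at_pcat)
next
  assume a: "bsrc E x = v \<and> (\<forall>i<length es. edge_at x i = Some (es ! i))"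
  let ?L = "length es"
  let ?z = "(shift E ^^ ?L) x"
  have zb: "?z \<in> bdry E" using bdry_iff_is_bdry_path[OF wf] is_bdry_path_funpow_shift[OF wf b] by blast
  have zs: "bsrc E ?z = prange E (v, es)"
  proof (cases "es = []")
    case True then show ?thesis using a by (simp add: prange_def)
  next
    case False
    then have "edge_at x (?L - 1) = Some (es ! (?L - 1))" using a by simp
    then have "bsrc E ((shift E ^^ Suc (?L - 1)) x) = rng E (es ! (?L - 1))" using bsrc_funpow_shift[OF wf b] by blast
    then show ?thesis using False by (simp add: prange_conv_nth)
  qed
  have "x = pcat (v, es) ?z"
  proof (rule bpath_eqI[where E = E])
    have "bsrc E (pcat (v, es) ?z) = v" by (rule bsrc_pcat) (use h a in auto)
    then show "bsrc E x = bsrc E (pcat (v, es) ?z)" using a by simp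
    show "edge_at x = edge_at (pcat (v, es) ?z)"
    proof
      fix i show "edge_at x i = edge_at (pcat (v, es) ?z) i"
        using a by (auto simp: edge_at_pcat edge_at_funpow_shift)
    qed
  qed
  then show "x \<in> cyl E (v, es)" unfolding cyl_def using zb zs by blast
qed

lemma funpow_shift_pcat:
  assumes wf: "wf_graph E" and p: "(v, es) \<in> fpaths E" and z: "is_bdry_path E z" and s: "bsrc E z = prange E (v, es)"
  shows "(shift E ^^ length es) (pcat (v, es) z) = z"
proof (rule bpath_eqI[where E = E])
  show "edge_at ((shift E ^^ length es) (pcat (v, es) z)) = edge_at z"
    by (rule ext) (simp add: edge_at_funpow_shift edge_at_pcat)
  have y: "is_bdry_path E (pcat (v, es) z)" using is_bdry_path_pcat[OF p z s] .
  show "bsrc E ((shift E ^^ length es) (pcat (v, es) z)) = bsrc E z"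
  proof (cases "es = []")
    case True
    have "bsrc E (pcat (v, es) z) = v" by (rule bsrc_pcat) (use True s in \<open>auto simp: prange_def\<close>)
    then show ?thesis using True s by (simp add: prange_def)
  next
    case False
    have "edge_at (pcat (v, es) z) (length es - 1) = Some (es ! (length es - 1))"
      using False by (simp add: edge_at_pcat)
    then have "bsrc E ((shift E ^^ Suc (length es - 1)) (pcat (v, es) z)) = rng E (es ! (length es - 1))"
      using bsrc_funpow_shift[OF wf y] by blast
    then show ?thesis using False s by (simp add: prange_conv_nth)
  qed
qed

lemma pcat_inj:
  assumes wf: "wf_graph E" and p: "(v, es) \<in> fpaths E"
    and "is_bdry_path E z" "bsrc E z = prange E (v, es)" "is_bdry_path E z'" "bsrc E z' = prange E (v, es)"
    and "pcat (v, es) z = pcat (v, es) z'"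
  shows "z = z'"
  using funpow_shift_pcat[OF wf p assms(3,4)] funpow_shift_pcat[OF wf p assms(5,6)] assms(7) by metis

lemma can_act_pcat:
  assumes wf: "wf_graph E" and p: "(v, es) \<in> fpaths E" and y: "y \<in> bdry E" and s: "bsrc E y = prange E (v, es)"
  shows "can_act E (Some (\<mu>, (v, es))) (pcat (v, es) y) = pcat \<mu> y"
proof -
  have yb: "is_bdry_path E y" using y bdry_iff_is_bdry_path[OF wf] by blast
  show ?thesis
    unfolding can_act.simps
  proof (rule the_equality)
    show "\<exists>ya. ya \<in> bdry E \<and> bsrc E ya = prange E (v, es) \<and> pcat (v, es) y = pcat (v, es) ya \<and> pcat \<mu> y = pcat \<mu> ya"
      using y s by blast
    fix z assume "\<exists>ya. ya \<in> bdry E \<and> bsrc E ya = prange E (v, es) \<and> pcat (v, es) y = pcat (v, es) ya \<and> z = pcat \<mu> ya"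
    then obtain y' where y': "y' \<in> bdry E" "bsrc E y' = prange E (v, es)" "pcat (v, es) y = pcat (v, es) y'" "z = pcat \<mu> y'"
      by blast
    have "is_bdry_path E y'" using y'(1) bdry_iff_is_bdry_path[OF wf] by blast
    then have "y = y'" using pcat_inj[OF wf p yb s _ y'(2) y'(3)] by blast
    then show "z = pcat \<mu> y" using y'(4) by simp
  qed
qed

lemma cyl_subset_bdry:
  assumes wf: "wf_graph E" and p: "(v, es) \<in> fpaths E"
  shows "cyl E (v, es) \<subseteq> bdry E"
proof
  fix x assume "x \<in> cyl E (v, es)"
  then obtain z where z: "x = pcat (v, es) z" "z \<in> bdry E" "bsrc E z = prange E (v, es)"
    unfolding cyl_def by blast
  have "is_bdry_path E z" using z(2) bdry_iff_is_bdry_path[OF wf] by blast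
  then have "is_bdry_path E x" using is_bdry_path_pcat[OF p _ z(3)] z(1) by simp
  then show "x \<in> bdry E" using bdry_iff_is_bdry_path[OF wf] by blast
qed

lemma topspace_bdry_top:
  assumes wf: "wf_graph E"
  shows "topspace (bdry_top E) = bdry E"
proof -
  have "\<Union>(bdry_basis E) = bdry E"
  proof
    show "\<Union>(bdry_basis E) \<subseteq> bdry E"
    proof
      fix x assume "x \<in> \<Union>(bdry_basis E)"
      then obtain \<mu> G where "x \<in> cyl E \<mu>" "\<mu> \<in> fpaths E" unfolding bdry_basis_def by blast
      then show "x \<in> bdry E" using cyl_subset_bdry[OF wf, of "fst \<mu>" "snd \<mu>"] by auto
    qed
    show "bdry E \<subseteq> \<Union>(bdry_basis E)"
    proof
      fix x assume x: "x \<in> bdry E"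
      then have b: "is_bdry_path E x" using bdry_iff_is_bdry_path[OF wf] by blast
      have p: "(bsrc E x, []) \<in> fpaths E" using b unfolding is_bdry_path_def fpaths_def by simp
      have c: "x \<in> cyl E (bsrc E x, [])" using mem_cyl_iff[OF wf b, of "[]" "bsrc E x"] by simp
      have "cyl E (bsrc E x, []) - (\<Union>e\<in>{}. cyl E (fst (bsrc E x, []), snd (bsrc E x, []) @ [e])) \<in> bdry_basis E"
        unfolding bdry_basis_def using p by blast
      then show "x \<in> \<Union>(bdry_basis E)" using c by blast
    qed
  qed
  then show ?thesis unfolding bdry_top_def by simp
qed

definition nbhd :: "('v, 'e) dgraph \<Rightarrow> ('v, 'e) bpath \<Rightarrow> nat \<Rightarrow> 'e set \<Rightarrow> ('v, 'e) bpath set" where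
  "nbhd E x n G = {y \<in> bdry E. bsrc E y = bsrc E x \<and> (\<forall>i<n. edge_at y i = edge_at x i) \<and> (\<forall>e\<in>G. edge_at y n \<noteq> Some e)}"

lemma next_edge_after_prefix:
  assumes wf: "wf_graph E" and x: "is_bdry_path E x" and y: "is_bdry_path E y"
    and s: "bsrc E y = bsrc E x" and ag: "\<forall>i<n. edge_at y i = edge_at x i" and n: "enat n \<le> blen x"
    and e: "edge_at y n = Some e"
  shows "e \<in> edges E \<and> src E e = bsrc E ((shift E ^^ n) x)"
proof -
  have "e \<in> edges E" using y e unfolding is_bdry_path_def by blast
  moreover have "src E e = bsrc E ((shift E ^^ n) y)"
  proof -
    have "is_bdry_path E ((shift E ^^ n) y)" using is_bdry_path_funpow_shift[OF wf y] .
    moreover have "edge_at ((shift E ^^ n) y) 0 = Some e" using e by (simp add: edge_at_funpow_shift)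
    ultimately show ?thesis unfolding is_bdry_path_def by blast
  qed
  moreover have "bsrc E ((shift E ^^ n) y) = bsrc E ((shift E ^^ n) x)"
  proof (cases n)
    case 0 then show ?thesis using s by simp
  next
    case (Suc m)
    then have ex: "edge_at x m = Some (the (edge_at x m))" using n by (auto simp: enat_le_blen_iff)
    then have ey: "edge_at y m = Some (the (edge_at x m))" using ag Suc by auto
    show ?thesis using bsrc_funpow_shift[OF wf x ex] bsrc_funpow_shift[OF wf y ey] Suc by simp
  qed
  ultimately show ?thesis by simp
qed

lemma mem_cyl_snoc_iff:
  assumes wf: "wf_graph E" and p: "(v, es) \<in> fpaths E"
    and e: "e \<in> edges E" "src E e = prange E (v, es)" and x: "is_bdry_path E x"
  shows "x \<in> cyl E (v, es @ [e]) \<longleftrightarrow> x \<in> cyl E (v, es) \<and> edge_at x (length es) = Some e"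
proof -
  have h: "es \<noteq> [] \<longrightarrow> src E (hd es) = v" using fpathsD(3)[OF p] by blast
  have h2: "es @ [e] \<noteq> [] \<longrightarrow> src E (hd (es @ [e])) = v"
  proof (cases "es = []")
    case True then show ?thesis using e by (auto simp: prange_def)
  next
    case False then show ?thesis using h by simp
  qed
  have "(\<forall>i<length (es @ [e]). edge_at x i = Some ((es @ [e]) ! i)) \<longleftrightarrow>
      (\<forall>i<length es. edge_at x i = Some (es ! i)) \<and> edge_at x (length es) = Some e"
  proof
    assume a: "\<forall>i<length (es @ [e]). edge_at x i = Some ((es @ [e]) ! i)"
    show "(\<forall>i<length es. edge_at x i = Some (es ! i)) \<and> edge_at x (length es) = Some e"
    proof (intro conjI allI impI)
      fix i assume "i < length es" then show "edge_at x i = Some (es ! i)" using a[rule_format, of i] by (simp add: nth_append)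
    next
      show "edge_at x (length es) = Some e" using a[rule_format, of "length es"] by simp
    qed
  next
    assume a: "(\<forall>i<length es. edge_at x i = Some (es ! i)) \<and> edge_at x (length es) = Some e"
    show "\<forall>i<length (es @ [e]). edge_at x i = Some ((es @ [e]) ! i)"
    proof (intro allI impI)
      fix i assume "i < length (es @ [e])"
      then consider "i < length es" | "i = length es" by fastforce
      then show "edge_at x i = Some ((es @ [e]) ! i)" using a by cases (simp_all add: nth_append)
    qed
  qed
  then show ?thesis using mem_cyl_iff[OF wf x h2] mem_cyl_iff[OF wf x h] by simp
qed

lemma mem_basic_set_iff:
  assumes wf: "wf_graph E" and p: "(v, es) \<in> fpaths E" and G: "G \<subseteq> {e \<in> edges E. src E e = prange E (v, es)}"
    and x: "is_bdry_path E x"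
  shows "x \<in> cyl E (v, es) - (\<Union>e\<in>G. cyl E (v, es @ [e])) \<longleftrightarrow>
    bsrc E x = v \<and> (\<forall>i<length es. edge_at x i = Some (es ! i)) \<and> (\<forall>e\<in>G. edge_at x (length es) \<noteq> Some e)"
proof -
  have "es \<noteq> [] \<longrightarrow> src E (hd es) = v" using fpathsD(3)[OF p] by blast
  then have c1: "x \<in> cyl E (v, es) \<longleftrightarrow> bsrc E x = v \<and> (\<forall>i<length es. edge_at x i = Some (es ! i))"
    by (rule mem_cyl_iff[OF wf x])
  have c2: "x \<in> cyl E (v, es @ [e]) \<longleftrightarrow> x \<in> cyl E (v, es) \<and> edge_at x (length es) = Some e"
    if "e \<in> G" for e
  proof (rule mem_cyl_snoc_iff[OF wf p _ _ x])
    show "e \<in> edges E" "src E e = prange E (v, es)" using that G by auto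
  qed
  show ?thesis using c1 c2 by blast
qed

lemma nbhd_eq_basic_set:
  fixes G :: "'e set"
  assumes wf: "wf_graph E" and x: "x \<in> bdry E" and n: "enat n \<le> blen x"
    and ve: "path_prefix E n x = (v, es)"
  defines "G' \<equiv> {e \<in> G. e \<in> edges E \<and> src E e = prange E (v, es)}"
  shows "nbhd E x n G = cyl E (v, es) - (\<Union>e\<in>G'. cyl E (v, es @ [e]))"
proof -
  have b: "is_bdry_path E x" using x bdry_iff_is_bdry_path[OF wf] by blast
  have v: "v = bsrc E x" and L: "length es = n" using ve path_prefix_simps[of E n x] by (metis fst_conv snd_conv)+
  have es: "\<And>i. i < n \<Longrightarrow> es ! i = the (edge_at x i)" using path_prefix_nth[of _ n E x] ve by simp
  have S: "\<And>i. i < n \<Longrightarrow> edge_at x i = Some (the (edge_at x i))" using n by (auto simp: enat_le_blen_iff)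
  have p: "(v, es) \<in> fpaths E" using path_prefix_in_fpaths[OF b n] ve by simp
  have pr: "prange E (v, es) = bsrc E ((shift E ^^ n) x)" using prange_path_prefix[OF wf b n] ve by simp
  have G'2: "G' \<subseteq> {e \<in> edges E. src E e = prange E (v, es)}" unfolding G'_def by blast
  show "nbhd E x n G = cyl E (v, es) - (\<Union>e\<in>G'. cyl E (v, es @ [e]))"
  proof
    show "cyl E (v, es) - (\<Union>e\<in>G'. cyl E (v, es @ [e])) \<subseteq> nbhd E x n G"
    proof
      fix y assume y: "y \<in> cyl E (v, es) - (\<Union>e\<in>G'. cyl E (v, es @ [e]))"
      have yb: "y \<in> bdry E" using y cyl_subset_bdry[OF wf p] by blast
      then have bky: "is_bdry_path E y" using bdry_iff_is_bdry_path[OF wf] by blast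
      have c: "bsrc E y = v \<and> (\<forall>i<length es. edge_at y i = Some (es ! i)) \<and> (\<forall>e\<in>G'. edge_at y (length es) \<noteq> Some e)"
        using mem_basic_set_iff[OF wf p G'2 bky] y by blast
      have ag: "\<forall>i<n. edge_at y i = edge_at x i" using c L es S by metis
      have "\<forall>e\<in>G. edge_at y n \<noteq> Some e"
      proof (intro ballI notI)
        fix e assume e: "e \<in> G" "edge_at y n = Some e"
        then have "e \<in> G'"
          using next_edge_after_prefix[OF wf b bky _ ag n e(2)] c v pr unfolding G'_def by simp
        then show False using c e(2) L by blast
      qed
      then show "y \<in> nbhd E x n G" unfolding nbhd_def using yb c v ag by blast
    qed
    show "nbhd E x n G \<subseteq> cyl E (v, es) - (\<Union>e\<in>G'. cyl E (v, es @ [e]))"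
    proof
      fix y assume y: "y \<in> nbhd E x n G"
      then have bky: "is_bdry_path E y" using bdry_iff_is_bdry_path[OF wf] unfolding nbhd_def by blast
      have "bsrc E y = v \<and> (\<forall>i<length es. edge_at y i = Some (es ! i)) \<and> (\<forall>e\<in>G'. edge_at y (length es) \<noteq> Some e)"
        using y v L es S unfolding nbhd_def G'_def by auto
      then show "y \<in> cyl E (v, es) - (\<Union>e\<in>G'. cyl E (v, es @ [e]))" using mem_basic_set_iff[OF wf p G'2 bky] by blast
    qed
  qed
qed

lemma openin_nbhd:
  assumes wf: "wf_graph E" and x: "x \<in> bdry E" and n: "enat n \<le> blen x" and G: "finite G"
  shows "openin (bdry_top E) (nbhd E x n G)"
proof -
  obtain v es where ve: "path_prefix E n x = (v, es)" by (cases "path_prefix E n x")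
  define G' where "G' = {e \<in> G. e \<in> edges E \<and> src E e = prange E (v, es)}"
  have "(v, es) \<in> fpaths E"
    using path_prefix_in_fpaths[OF _ n] ve x bdry_iff_is_bdry_path[OF wf] by metis
  moreover have "finite G'" "G' \<subseteq> {e \<in> edges E. src E e = prange E (v, es)}"
    using G unfolding G'_def by auto
  ultimately have "cyl E (v, es) - (\<Union>e\<in>G'. cyl E (fst (v, es), snd (v, es) @ [e])) \<in> bdry_basis E"
    unfolding bdry_basis_def by blast
  then show ?thesis
    unfolding bdry_top_def nbhd_eq_basic_set[OF wf x n ve] G'_def[symmetric]
    by (simp add: topology_generated_by_Basis)
qed

lemma self_in_nbhd: "x \<in> bdry E \<Longrightarrow> (\<forall>e\<in>G. edge_at x n \<noteq> Some e) \<Longrightarrow> x \<in> nbhd E x n G"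
  unfolding nbhd_def by blast

lemma continuous_map_into_bdry_top:
  assumes wf: "wf_graph F" and im: "\<And>x. x \<in> topspace X \<Longrightarrow> f x \<in> bdry F"
    and H: "\<And>x n G. x \<in> topspace X \<Longrightarrow> finite G \<Longrightarrow> enat n \<le> blen (f x) \<Longrightarrow> (\<forall>e\<in>G. edge_at (f x) n \<noteq> Some e)
       \<Longrightarrow> \<exists>U. openin X U \<and> x \<in> U \<and> (\<forall>y\<in>U. f y \<in> nbhd F (f x) n G)"
  shows "continuous_map X (bdry_top F) f"
  unfolding bdry_top_def
proof (rule continuous_on_generated_topo)
  show "f ` topspace X \<subseteq> \<Union>(bdry_basis F)"
    using im topspace_bdry_top[OF wf] unfolding bdry_top_def by auto
  fix B assume "B \<in> bdry_basis F"
  then obtain v es G where B: "B = cyl F (v, es) - (\<Union>e\<in>G. cyl F (v, es @ [e]))" and p: "(v, es) \<in> fpaths F"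
    and G: "finite G" "G \<subseteq> {e \<in> edges F. src F e = prange F (v, es)}"
    unfolding bdry_basis_def by fastforce
  show "openin X (f -` B \<inter> topspace X)"
  proof (subst openin_subopen, intro ballI)
    fix x assume x: "x \<in> f -` B \<inter> topspace X"
    then have fx: "is_bdry_path F (f x)" using im bdry_iff_is_bdry_path[OF wf] by blast
    have c: "bsrc F (f x) = v \<and> (\<forall>i<length es. edge_at (f x) i = Some (es ! i)) \<and> (\<forall>e\<in>G. edge_at (f x) (length es) \<noteq> Some e)"
      using mem_basic_set_iff[OF wf p G(2) fx] x B by blast
    then have n: "enat (length es) \<le> blen (f x)" by (simp add: enat_le_blen_iff)
    obtain U where U: "openin X U" "x \<in> U" "\<forall>y\<in>U. f y \<in> nbhd F (f x) (length es) G"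
      using H[OF _ G(1) n] x c by blast
    have "U \<subseteq> f -` B \<inter> topspace X"
    proof
      fix y assume y: "y \<in> U"
      then have yt: "y \<in> topspace X" using openin_subset[OF U(1)] by blast
      have "f y \<in> nbhd F (f x) (length es) G" using U(3) y by blast
      then have fy: "f y \<in> bdry F" "bsrc F (f y) = v" "\<forall>i<length es. edge_at (f y) i = Some (es ! i)"
          "\<forall>e\<in>G. edge_at (f y) (length es) \<noteq> Some e"
        using c unfolding nbhd_def by auto
      have "is_bdry_path F (f y)" using fy(1) bdry_iff_is_bdry_path[OF wf] by blast
      then have "f y \<in> B" using mem_basic_set_iff[OF wf p G(2)] fy B by blast
      then show "y \<in> f -` B \<inter> topspace X" using yt by blast
    qed
    then show "\<exists>T. openin X T \<and> x \<in> T \<and> T \<subseteq> f -` B \<inter> topspace X" using U by blast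
  qed
qed

lemma bdry_ge_antimono: "n \<le> m \<Longrightarrow> bdry_ge E m \<subseteq> bdry_ge E n"
  unfolding bdry_ge_def using order_trans enat_ord_simps(1) by blast

lemma funpow_shift_in_bdry_ge:
  assumes wf: "wf_graph E" and x: "x \<in> bdry_ge E (m + n)"
  shows "(shift E ^^ n) x \<in> bdry_ge E m"
proof -
  have "x \<in> bdry E" "enat (m + n) \<le> blen x" using x unfolding bdry_ge_def by auto
  then show ?thesis unfolding bdry_ge_def using bdry_iff_is_bdry_path[OF wf] is_bdry_path_funpow_shift[OF wf] enat_add_le_blen_iff by blast
qed

lemma continuous_map_shift:
  assumes wf: "wf_graph E"
  shows "continuous_map (subtopology (bdry_top E) (bdry_ge E 1)) (bdry_top E) (shift E)"
proof (rule continuous_map_into_bdry_top[OF wf])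
  fix x assume "x \<in> topspace (subtopology (bdry_top E) (bdry_ge E 1))"
  then have x: "x \<in> bdry_ge E 1" by (simp add: topspace_bdry_top[OF wf] bdry_ge_def)
  then have xb: "is_bdry_path E x" unfolding bdry_ge_def using bdry_iff_is_bdry_path[OF wf] by blast
  show "shift E x \<in> bdry E" using is_bdry_path_shift[OF wf xb] bdry_iff_is_bdry_path[OF wf] by blast
next
  fix x n G assume "x \<in> topspace (subtopology (bdry_top E) (bdry_ge E 1))" and G: "finite G"
    and n: "enat n \<le> blen (shift E x)" and g: "\<forall>e\<in>G. edge_at (shift E x) n \<noteq> Some e"
  then have x: "x \<in> bdry_ge E 1" by (simp add: topspace_bdry_top[OF wf] bdry_ge_def)
  then have xb: "x \<in> bdry E" and x1: "enat 1 \<le> blen x" unfolding bdry_ge_def by auto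
  have xk: "is_bdry_path E x" using xb bdry_iff_is_bdry_path[OF wf] by blast
  have n1: "enat (n + 1) \<le> blen x" using enat_add_le_blenI[OF x1, of n] n by simp
  obtain e0 where e0: "edge_at x 0 = Some e0" using x1 by (auto simp: enat_le_blen_iff)
  let ?U = "nbhd E x (n + 1) G \<inter> bdry_ge E 1"
  have "openin (subtopology (bdry_top E) (bdry_ge E 1)) ?U"
    using openin_nbhd[OF wf xb n1 G] by (rule openin_subtopology_Int)
  moreover have "x \<in> ?U" using self_in_nbhd[OF xb] g x by (simp add: edge_at_shift)
  moreover have "\<forall>y\<in>?U. shift E y \<in> nbhd E (shift E x) n G"
  proof
    fix y assume y: "y \<in> ?U"
    then have yb: "y \<in> bdry E" and ag: "\<forall>i<n + 1. edge_at y i = edge_at x i" and gy: "\<forall>e\<in>G. edge_at y (n + 1) \<noteq> Some e"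
      unfolding nbhd_def by auto
    have yk: "is_bdry_path E y" using yb bdry_iff_is_bdry_path[OF wf] by blast
    have "edge_at y 0 = Some e0" using ag e0 by simp
    then have "bsrc E (shift E y) = bsrc E (shift E x)" using bsrc_shift[OF yk] bsrc_shift[OF xk e0] by simp
    moreover have "shift E y \<in> bdry E" using is_bdry_path_shift[OF wf yk] bdry_iff_is_bdry_path[OF wf] by blast
    ultimately show "shift E y \<in> nbhd E (shift E x) n G" using ag gy unfolding nbhd_def by (simp add: edge_at_shift)
  qed
  ultimately show "\<exists>U. openin (subtopology (bdry_top E) (bdry_ge E 1)) U \<and> x \<in> U \<and> (\<forall>y\<in>U. shift E y \<in> nbhd E (shift E x) n G)"
    by blast
qed

lemma continuous_map_funpow_shift:
  assumes wf: "wf_graph E"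
  shows "continuous_map (subtopology (bdry_top E) (bdry_ge E n)) (bdry_top E) (shift E ^^ n)"
proof (induction n)
  case 0
  show ?case by (simp add: continuous_map_from_subtopology)
next
  case (Suc n)
  have c1: "continuous_map (subtopology (bdry_top E) (bdry_ge E (Suc n))) (bdry_top E) (shift E)"
    using continuous_map_from_subtopology_mono[OF continuous_map_shift[OF wf] bdry_ge_antimono[of 1 "Suc n"]] by simp
  have "shift E \<in> topspace (subtopology (bdry_top E) (bdry_ge E (Suc n))) \<rightarrow> bdry_ge E n"
  proof
    fix x assume "x \<in> topspace (subtopology (bdry_top E) (bdry_ge E (Suc n)))"
    then have "x \<in> bdry_ge E (n + 1)" by simp
    then show "shift E x \<in> bdry_ge E n" using funpow_shift_in_bdry_ge[OF wf, of x n 1] by simp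
  qed
  then have c2: "continuous_map (subtopology (bdry_top E) (bdry_ge E (Suc n))) (subtopology (bdry_top E) (bdry_ge E n)) (shift E)"
    using continuous_map_into_subtopology[OF c1] by blast
  have "continuous_map (subtopology (bdry_top E) (bdry_ge E (Suc n))) (bdry_top E) ((shift E ^^ n) \<circ> shift E)"
    using continuous_map_compose[OF c2 Suc.IH] .
  moreover have "shift E ^^ Suc n = (shift E ^^ n) \<circ> shift E" by (rule funpow_Suc_right)
  ultimately show ?case by (simp only:)
qed

lemma pcat_mem_nbhd:
  assumes wf: "wf_graph E" and p: "(v, es) \<in> fpaths E"
    and y: "y \<in> bdry E" "bsrc E y = prange E (v, es)" and z: "bsrc E z = prange E (v, es)"
    and g: "\<forall>e\<in>G. edge_at (pcat (v, es) z) n \<noteq> Some e"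
    and yz: "length es \<le> n \<Longrightarrow> y \<in> nbhd E z (n - length es) G"
  shows "pcat (v, es) y \<in> nbhd E (pcat (v, es) z) n G"
proof -
  have "pcat (v, es) y \<in> bdry E"
    using is_bdry_path_pcat[OF p] y bdry_iff_is_bdry_path[OF wf] by blast
  moreover have "\<forall>i<n. edge_at (pcat (v, es) y) i = edge_at (pcat (v, es) z) i"
    and "\<forall>e\<in>G. edge_at (pcat (v, es) y) n \<noteq> Some e"
    using g yz unfolding nbhd_def by (auto simp: edge_at_pcat)
  ultimately show ?thesis
    unfolding nbhd_def using bsrc_pcat_fpaths[OF p y(2)] bsrc_pcat_fpaths[OF p z] by simp
qed

lemma continuous_map_pcat:
  assumes wf: "wf_graph E" and p: "(v, es) \<in> fpaths E"
  shows "continuous_map (subtopology (bdry_top E) {z \<in> bdry E. bsrc E z = prange E (v, es)}) (bdry_top E) (pcat (v, es))"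
proof (rule continuous_map_into_bdry_top[OF wf])
  let ?D = "{z \<in> bdry E. bsrc E z = prange E (v, es)}"
  let ?Z = "subtopology (bdry_top E) ?D"
  fix z assume "z \<in> topspace ?Z"
  then show "pcat (v, es) z \<in> bdry E"
    using is_bdry_path_pcat[OF p] bdry_iff_is_bdry_path[OF wf] by (auto simp: topspace_bdry_top[OF wf])
next
  let ?D = "{z \<in> bdry E. bsrc E z = prange E (v, es)}"
  let ?Z = "subtopology (bdry_top E) ?D"
  let ?L = "length es"
  fix z n G assume zt: "z \<in> topspace ?Z" and G: "finite G"
    and n: "enat n \<le> blen (pcat (v, es) z)" and g: "\<forall>e\<in>G. edge_at (pcat (v, es) z) n \<noteq> Some e"
  then have z: "z \<in> bdry E" "bsrc E z = prange E (v, es)" by (auto simp: topspace_bdry_top[OF wf])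
  show "\<exists>U. openin ?Z U \<and> z \<in> U \<and> (\<forall>y\<in>U. pcat (v, es) y \<in> nbhd E (pcat (v, es) z) n G)"
  proof (cases "n < ?L")
    case True
    then have "\<forall>y\<in>topspace ?Z. pcat (v, es) y \<in> nbhd E (pcat (v, es) z) n G"
      using pcat_mem_nbhd[OF wf p _ _ z(2) g] by (auto simp: topspace_bdry_top[OF wf])
    then show ?thesis using zt openin_topspace by blast
  next
    case False
    have "enat (n - ?L) \<le> blen z"
      unfolding enat_le_blen_iff
    proof (intro allI impI)
      fix j assume "j < n - ?L"
      then have "edge_at (pcat (v, es) z) (j + ?L) \<noteq> None" using n by (simp add: enat_le_blen_iff)
      then show "edge_at z j \<noteq> None" by (simp add: edge_at_pcat)
    qed
    then have "openin ?Z (nbhd E z (n - ?L) G \<inter> ?D)"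
      using openin_nbhd[OF wf z(1) _ G] by (blast intro: openin_subtopology_Int)
    moreover have "z \<in> nbhd E z (n - ?L) G \<inter> ?D"
      using self_in_nbhd[OF z(1)] g False z by (simp add: edge_at_pcat)
    moreover have "\<forall>y\<in>nbhd E z (n - ?L) G \<inter> ?D. pcat (v, es) y \<in> nbhd E (pcat (v, es) z) n G"
      using pcat_mem_nbhd[OF wf p _ _ z(2) g] by auto
    ultimately show ?thesis by blast
  qed
qed

lemma cylE:
  assumes wf: "wf_graph E" and p: "(v, es) \<in> fpaths E" and x: "x \<in> cyl E (v, es)"
  obtains z where "x = pcat (v, es) z" "z \<in> bdry E" "bsrc E z = prange E (v, es)"
    "(shift E ^^ length es) x = z" "x \<in> bdry_ge E (length es)"
proof -
  obtain z where z: "x = pcat (v, es) z" "z \<in> bdry E" "bsrc E z = prange E (v, es)"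
    using x unfolding cyl_def by blast
  have zk: "is_bdry_path E z" using z(2) bdry_iff_is_bdry_path[OF wf] by blast
  have "(shift E ^^ length es) x = z" using funpow_shift_pcat[OF wf p zk z(3)] z(1) by simp
  moreover have "x \<in> bdry_ge E (length es)"
    unfolding bdry_ge_def using cyl_subset_bdry[OF wf p] x z(1) by (auto simp: enat_le_blen_iff edge_at_pcat)
  ultimately show ?thesis using that z by blast
qed

lemma cyl_subset_bdry_ge:
  assumes wf: "wf_graph E" and p: "(v, es) \<in> fpaths E"
  shows "cyl E (v, es) \<subseteq> bdry_ge E (length es)"
proof
  fix x assume "x \<in> cyl E (v, es)"
  then obtain z where "x \<in> bdry_ge E (length es)" by (rule cylE[OF wf p])
  then show "x \<in> bdry_ge E (length es)" .
qed

lemma can_act_eq_pcat_funpow_shift: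
  assumes wf: "wf_graph E" and p: "(v, es) \<in> fpaths E" and x: "x \<in> cyl E (v, es)"
  shows "can_act E (Some (\<mu>, (v, es))) x = pcat \<mu> ((shift E ^^ length es) x)"
proof -
  obtain z where "x = pcat (v, es) z" "z \<in> bdry E" "bsrc E z = prange E (v, es)"
    "(shift E ^^ length es) x = z"
    by (rule cylE[OF wf p x])
  then show ?thesis using can_act_pcat[OF wf p] by simp
qed

lemma can_act_mem_cyl:
  assumes wf: "wf_graph E" and p2: "(v2, es2) \<in> fpaths E"
    and pr: "prange E (v1, es1) = prange E (v2, es2)" and x: "x \<in> cyl E (v2, es2)"
  shows "can_act E (Some ((v1, es1), (v2, es2))) x \<in> cyl E (v1, es1)"
proof -
  obtain z where "x = pcat (v2, es2) z" "z \<in> bdry E" "bsrc E z = prange E (v2, es2)"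
    by (rule cylE[OF wf p2 x])
  then show ?thesis unfolding cyl_def using can_act_pcat[OF wf p2] pr by auto
qed

lemma continuous_map_can_act:
  assumes wf: "wf_graph E" and p1: "(v1, es1) \<in> fpaths E" and p2: "(v2, es2) \<in> fpaths E"
    and pr: "prange E (v1, es1) = prange E (v2, es2)"
  shows "continuous_map (subtopology (bdry_top E) (cyl E (v2, es2))) (bdry_top E)
           (can_act E (Some ((v1, es1), (v2, es2))))"
proof (rule continuous_map_eq)
  let ?Z = "subtopology (bdry_top E) (cyl E (v2, es2))"
  let ?D = "{z \<in> bdry E. bsrc E z = prange E (v1, es1)}"
  have "continuous_map ?Z (bdry_top E) (shift E ^^ length es2)"
    using continuous_map_from_subtopology_mono[OF continuous_map_funpow_shift[OF wf] cyl_subset_bdry_ge[OF wf p2]] .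
  moreover have "(shift E ^^ length es2) \<in> topspace ?Z \<rightarrow> ?D"
  proof
    fix x assume "x \<in> topspace ?Z"
    then have "x \<in> cyl E (v2, es2)" by simp
    then obtain z where "z \<in> bdry E" "bsrc E z = prange E (v2, es2)" "(shift E ^^ length es2) x = z"
      by (rule cylE[OF wf p2])
    then show "(shift E ^^ length es2) x \<in> ?D" using pr by simp
  qed
  ultimately have "continuous_map ?Z (subtopology (bdry_top E) ?D) (shift E ^^ length es2)"
    using continuous_map_into_subtopology by blast
  then show "continuous_map ?Z (bdry_top E) (\<lambda>x. pcat (v1, es1) ((shift E ^^ length es2) x))"
    using continuous_map_compose[OF _ continuous_map_pcat[OF wf p1]] by (simp add: o_def)
  show "pcat (v1, es1) ((shift E ^^ length es2) x) = can_act E (Some ((v1, es1), (v2, es2))) x"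
    if "x \<in> topspace ?Z" for x
    using that can_act_eq_pcat_funpow_shift[OF wf p2] by simp
qed

lemma locally_constant_path_prefix:
  assumes wf: "wf_graph F" and m: "locally_constant X m" and g: "continuous_map X (bdry_top F) g"
    and v: "\<And>x. x \<in> topspace X \<Longrightarrow> enat (m x) \<le> blen (g x)"
  shows "locally_constant X (\<lambda>x. path_prefix F (m x) (g x))"
  unfolding locally_constant_def
proof
  fix x assume x: "x \<in> topspace X"
  obtain U where U: "openin X U" "x \<in> U" "\<forall>y\<in>U. m y = m x" using m x unfolding locally_constant_def by blast
  have gx: "g x \<in> bdry F" using continuous_map_image_subset_topspace[OF g] x topspace_bdry_top[OF wf] by blast
  have o: "openin (bdry_top F) (nbhd F (g x) (m x) {})" using openin_nbhd[OF wf gx v[OF x]] by simp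
  have "\<forall>U. openin (bdry_top F) U \<longrightarrow> openin X {x \<in> topspace X. g x \<in> U}" using g unfolding continuous_map_def by (elim conjE)
  then have V: "openin X {y \<in> topspace X. g y \<in> nbhd F (g x) (m x) {}}" using o by blast
  have "x \<in> U \<inter> {y \<in> topspace X. g y \<in> nbhd F (g x) (m x) {}}" using U(2) x self_in_nbhd[OF gx, of "{}"] by blast
  moreover have "\<forall>y\<in>U \<inter> {y \<in> topspace X. g y \<in> nbhd F (g x) (m x) {}}. path_prefix F (m y) (g y) = path_prefix F (m x) (g x)"
  proof
    fix y assume y: "y \<in> U \<inter> {y \<in> topspace X. g y \<in> nbhd F (g x) (m x) {}}"
    then have my: "m y = m x" using U(3) by blast
    have "bsrc F (g y) = bsrc F (g x)" "\<forall>i<m x. edge_at (g y) i = edge_at (g x) i" using y unfolding nbhd_def by auto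
    then show "path_prefix F (m y) (g y) = path_prefix F (m x) (g x)" unfolding path_prefix_def my by simp
  qed
  ultimately show "\<exists>U. openin X U \<and> x \<in> U \<and> (\<forall>y\<in>U. path_prefix F (m y) (g y) = path_prefix F (m x) (g x))"
    using openin_Int[OF U(1) V] by blast
qed


section \<open>Tail equivalence\<close>

definition tail_eq :: "('v, 'e) dgraph \<Rightarrow> ('v, 'e) bpath \<Rightarrow> ('v, 'e) bpath \<Rightarrow> nat \<times> nat \<Rightarrow> bool" where
  "tail_eq E x y mn \<longleftrightarrow> enat (fst mn) \<le> blen x \<and> enat (snd mn) \<le> blen y
     \<and> (shift E ^^ fst mn) x = (shift E ^^ snd mn) y"

lemma tail_eq_swap: "tail_eq E x y mn \<Longrightarrow> tail_eq E y x (prod.swap mn)"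
  unfolding tail_eq_def by simp

lemma funpow_shift_catch_up:
  assumes N: "enat N \<le> blen x" "m \<le> N" and xy: "(shift E ^^ m) x = (shift E ^^ n) y"
    and n: "enat n \<le> blen y"
  shows "(shift E ^^ (n + (N - m))) y = (shift E ^^ N) x \<and> enat (n + (N - m)) \<le> blen y"
proof
  have fp: "\<And>a b z. (shift E ^^ (a + b)) z = (shift E ^^ a) ((shift E ^^ b) z)"
    by (simp add: funpow_add)
  have "(shift E ^^ (n + (N - m))) y = (shift E ^^ (N - m)) ((shift E ^^ n) y)"
    using fp[of "N - m" n y] by (simp add: add.commute)
  also have "\<dots> = (shift E ^^ (N - m)) ((shift E ^^ m) x)"
    using xy by simp
  also have "\<dots> = (shift E ^^ N) x"
    using fp[of "N - m" m x] N(2) by simp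
  finally show "(shift E ^^ (n + (N - m))) y = (shift E ^^ N) x" .
  have "enat ((N - m) + m) \<le> blen x" using N by simp
  then have "enat (N - m) \<le> blen ((shift E ^^ n) y)"
    using enat_add_le_blen_iff xy by metis
  from enat_add_le_blenI[OF n this] show "enat (n + (N - m)) \<le> blen y"
    by (simp add: add.commute)
qed

text \<open>Both outer paths are shifted so far that the middle one reaches the larger of its two lags.\<close>

definition compose_lags :: "nat \<times> nat \<Rightarrow> nat \<times> nat \<Rightarrow> nat \<times> nat" where
  "compose_lags p q = (let N = max (snd p) (fst q) in (fst p + (N - snd p), snd q + (N - fst q)))"

lemma tail_eq_trans:
  assumes "tail_eq E x w p" "tail_eq E w y q"
  shows "tail_eq E x y (compose_lags p q)"
proof -
  obtain a b c d where p: "p = (a, b)" and q: "q = (c, d)" by fastforce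
  let ?N = "max b c"
  have x: "enat a \<le> blen x" "(shift E ^^ b) w = (shift E ^^ a) x"
    and y: "enat d \<le> blen y" "(shift E ^^ c) w = (shift E ^^ d) y"
    and w: "enat ?N \<le> blen w"
    using assms unfolding tail_eq_def p q by (auto simp: max_def)
  have "(shift E ^^ (a + (?N - b))) x = (shift E ^^ ?N) w \<and> enat (a + (?N - b)) \<le> blen x"
    by (rule funpow_shift_catch_up[OF w max.cobounded1 x(2) x(1)])
  moreover have "(shift E ^^ (d + (?N - c))) y = (shift E ^^ ?N) w \<and> enat (d + (?N - c)) \<le> blen y"
    by (rule funpow_shift_catch_up[OF w max.cobounded2 y(2) y(1)])
  ultimately show ?thesis unfolding tail_eq_def compose_lags_def Let_def p q by simp
qed

lemma mem_cyl_path_prefix: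
  assumes wf: "wf_graph E" and x: "x \<in> bdry E" and n: "enat n \<le> blen x"
  shows "x \<in> cyl E (path_prefix E n x)"
proof -
  have b: "is_bdry_path E x" using x bdry_iff_is_bdry_path[OF wf] by blast
  obtain v es where ve: "path_prefix E n x = (v, es)" by (cases "path_prefix E n x")
  have v: "v = bsrc E x" and L: "length es = n"
    using ve path_prefix_simps[of E n x] by (metis fst_conv snd_conv)+
  have "edge_at x i = Some (es ! i)" if "i < length es" for i
    using that path_prefix_nth[of i n E x] ve n L by (auto simp: enat_le_blen_iff)
  moreover have "es \<noteq> [] \<longrightarrow> src E (hd es) = v"
    using fpathsD(3) path_prefix_in_fpaths[OF b n] ve by metis
  ultimately show ?thesis using mem_cyl_iff[OF wf b] ve v by simp
qed

lemma can_act_path_prefixes: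
  assumes wf: "wf_graph E" and x: "x \<in> bdry E" and y: "y \<in> bdry E" and xy: "tail_eq E x y mn"
  shows "Some (path_prefix E (snd mn) y, path_prefix E (fst mn) x) \<in> graph_semigroup E"
    and "x \<in> cyl E (path_prefix E (fst mn) x)"
    and "can_act E (Some (path_prefix E (snd mn) y, path_prefix E (fst mn) x)) x = y"
proof -
  have bx: "is_bdry_path E x" and "is_bdry_path E y" using x y bdry_iff_is_bdry_path[OF wf] by auto
  obtain m n where mn: "mn = (m, n)" by fastforce
  have m: "enat m \<le> blen x" and n: "enat n \<le> blen y" and w: "(shift E ^^ m) x = (shift E ^^ n) y"
    using xy unfolding tail_eq_def mn by auto
  obtain va esa where a: "path_prefix E m x = (va, esa)" by (cases "path_prefix E m x")
  obtain vb esb where b: "path_prefix E n y = (vb, esb)" by (cases "path_prefix E n y")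
  have pa: "(va, esa) \<in> fpaths E" and pb: "(vb, esb) \<in> fpaths E"
    using path_prefix_in_fpaths[OF bx m] path_prefix_in_fpaths[OF \<open>is_bdry_path E y\<close> n] a b by simp_all
  have "prange E (va, esa) = prange E (vb, esb)"
    using prange_path_prefix[OF wf bx m] prange_path_prefix[OF wf \<open>is_bdry_path E y\<close> n] a b w by simp
  then show "Some (path_prefix E (snd mn) y, path_prefix E (fst mn) x) \<in> graph_semigroup E"
    using pa pb a b mn by (simp add: graph_semigroup_def)
  have xc: "x \<in> cyl E (va, esa)" and yc: "y \<in> cyl E (vb, esb)"
    using mem_cyl_path_prefix[OF wf x m] mem_cyl_path_prefix[OF wf y n] a b by simp_all
  then show "x \<in> cyl E (path_prefix E (fst mn) x)" using a mn by simp
  obtain w1 where w1: "x = pcat (va, esa) w1" "w1 \<in> bdry E" "bsrc E w1 = prange E (va, esa)"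
      "(shift E ^^ length esa) x = w1"
    by (rule cylE[OF wf pa xc])
  obtain w2 where w2: "y = pcat (vb, esb) w2" "(shift E ^^ length esb) y = w2"
    by (rule cylE[OF wf pb yc])
  have "length esa = m" "length esb = n"
    using path_prefix_simps(1)[of E m x] path_prefix_simps(1)[of E n y] a b by simp_all
  then have "w1 = w2" using w1(4) w2(2) w by simp
  then show "can_act E (Some (path_prefix E (snd mn) y, path_prefix E (fst mn) x)) x = y"
    using can_act_pcat[OF wf pa w1(2) w1(3), of "(vb, esb)"] w1(1) w2(1) a b mn by simp
qed

lemma tail_eq_can_act:
  assumes wf: "wf_graph E" and p1: "(v1, es1) \<in> fpaths E" and p2: "(v2, es2) \<in> fpaths E"
    and pr: "prange E (v1, es1) = prange E (v2, es2)" and x: "x \<in> cyl E (v2, es2)"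
  shows "tail_eq E (can_act E (Some ((v1, es1), (v2, es2))) x) x (length es1, length es2)"
proof -
  obtain z where z: "x = pcat (v2, es2) z" "z \<in> bdry E" "bsrc E z = prange E (v2, es2)"
      "(shift E ^^ length es2) x = z" "x \<in> bdry_ge E (length es2)"
    by (rule cylE[OF wf p2 x])
  have y: "can_act E (Some ((v1, es1), (v2, es2))) x = pcat (v1, es1) z"
    using can_act_pcat[OF wf p2 z(2) z(3)] z(1) by simp
  have "is_bdry_path E z" using z(2) bdry_iff_is_bdry_path[OF wf] by blast
  then have "(shift E ^^ length es1) (pcat (v1, es1) z) = z"
    using funpow_shift_pcat[OF wf p1] z(3) pr by simp
  moreover have "pcat (v1, es1) z \<in> bdry_ge E (length es1)"
    using cyl_subset_bdry_ge[OF wf p1] can_act_mem_cyl[OF wf p2 pr x] y by auto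
  ultimately show ?thesis
    using z(4,5) y unfolding tail_eq_def bdry_ge_def by simp
qed

definition graph_orbit_cocycles ::
  "('v, 'e) dgraph \<Rightarrow> ('w, 'f) dgraph \<Rightarrow> (('v, 'e) bpath \<Rightarrow> ('w, 'f) bpath)
     \<Rightarrow> (('v, 'e) bpath \<Rightarrow> nat) \<Rightarrow> (('v, 'e) bpath \<Rightarrow> nat) \<Rightarrow> bool" where
  "graph_orbit_cocycles E F \<phi> k l \<longleftrightarrow>
     continuous_map (subtopology (bdry_top E) (bdry_ge E 1)) (discrete_topology UNIV) k
   \<and> continuous_map (subtopology (bdry_top E) (bdry_ge E 1)) (discrete_topology UNIV) l
   \<and> (\<forall>x \<in> bdry_ge E 1. tail_eq F (\<phi> (shift E x)) (\<phi> x) (k x, l x))"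

definition action_orbit_cocycle ::
  "'s set \<Rightarrow> 'x topology \<Rightarrow> ('s \<Rightarrow> 'x set) \<Rightarrow> ('s \<Rightarrow> 'x \<Rightarrow> 'x) \<Rightarrow>
   't set \<Rightarrow> ('t \<Rightarrow> 'y set) \<Rightarrow> ('t \<Rightarrow> 'y \<Rightarrow> 'y) \<Rightarrow> ('x \<Rightarrow> 'y) \<Rightarrow> ('s \<times> 'x \<Rightarrow> 't) \<Rightarrow> bool" where
  "action_orbit_cocycle S X domS \<theta> T domT \<gamma> \<phi> a \<longleftrightarrow>
     continuous_map (subtopology (prod_topology (discrete_topology S) X) {(s, x). s \<in> S \<and> x \<in> domS s})
       (discrete_topology T) a
   \<and> (\<forall>s \<in> S. \<forall>x \<in> domS s. \<phi> x \<in> domT (a (s, x)) \<and> \<phi> (\<theta> s x) = \<gamma> (a (s, x)) (\<phi> x))"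

lemma graph_coe_iff_orbit_cocycles:
  "graph_coe E F \<longleftrightarrow> (\<exists>\<phi> \<psi>. homeomorphic_maps (bdry_top E) (bdry_top F) \<phi> \<psi>
     \<and> (\<exists>k l. graph_orbit_cocycles E F \<phi> k l) \<and> (\<exists>k l. graph_orbit_cocycles F E \<psi> k l))"
  unfolding graph_coe_def graph_orbit_cocycles_def tail_eq_def fst_conv snd_conv by blast

lemma action_coe_iff_orbit_cocycles:
  "action_coe S X domS \<theta> T Y domT \<gamma> \<longleftrightarrow> (\<exists>\<phi> \<psi>. homeomorphic_maps X Y \<phi> \<psi>
     \<and> (\<exists>a. action_orbit_cocycle S X domS \<theta> T domT \<gamma> \<phi> a)
     \<and> (\<exists>b. action_orbit_cocycle T Y domT \<gamma> S domS \<theta> \<psi> b))"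
  unfolding action_coe_def action_orbit_cocycle_def by blast

lemma graph_semigroup_cases:
  assumes "s \<in> graph_semigroup E"
  obtains (None) "s = None"
  | (Some) v1 es1 v2 es2 where "s = Some ((v1, es1), (v2, es2))" "(v1, es1) \<in> fpaths E" "(v2, es2) \<in> fpaths E"
      "prange E (v1, es1) = prange E (v2, es2)"
  using assms unfolding graph_semigroup_def by auto


section \<open>From orbit cocycles of the shift to cocycles of the canonical action\<close>

fun iter_lags :: "('a \<Rightarrow> 'a) \<Rightarrow> ('a \<Rightarrow> nat) \<Rightarrow> ('a \<Rightarrow> nat) \<Rightarrow> nat \<Rightarrow> 'a \<Rightarrow> nat \<times> nat" where
  "iter_lags \<sigma> k l 0 x = (0, 0)"
| "iter_lags \<sigma> k l (Suc n) x = compose_lags (k ((\<sigma> ^^ n) x), l ((\<sigma> ^^ n) x)) (iter_lags \<sigma> k l n x)"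

context
  fixes E :: "('v, 'e) dgraph" and F :: "('w, 'f) dgraph"
    and \<phi> :: "('v, 'e) bpath \<Rightarrow> ('w, 'f) bpath" and k l :: "('v, 'e) bpath \<Rightarrow> nat"
  assumes wf_E: "wf_graph E" and wf_F: "wf_graph F"
    and continuous_\<phi>: "continuous_map (bdry_top E) (bdry_top F) \<phi>"
    and cocycles: "graph_orbit_cocycles E F \<phi> k l"
begin

lemma bdry_image: "x \<in> bdry E \<Longrightarrow> \<phi> x \<in> bdry F"
  using continuous_map_image_subset_topspace[OF continuous_\<phi>]
  unfolding topspace_bdry_top[OF wf_E] topspace_bdry_top[OF wf_F] by blast

lemma tail_eq_iter_lags:
  "x \<in> bdry_ge E n \<Longrightarrow> tail_eq F (\<phi> ((shift E ^^ n) x)) (\<phi> x) (iter_lags (shift E) k l n x)"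
proof (induction n arbitrary: x)
  case 0
  then show ?case by (simp add: tail_eq_def zero_enat_def[symmetric])
next
  case (Suc n)
  have "x \<in> bdry_ge E n" using Suc.prems bdry_ge_antimono[of n "Suc n"] by auto
  moreover have "(shift E ^^ n) x \<in> bdry_ge E 1"
    using funpow_shift_in_bdry_ge[OF wf_E, of x 1 n] Suc.prems by (simp add: add.commute)
  ultimately show ?case
    using tail_eq_trans[OF _ Suc.IH] cocycles unfolding graph_orbit_cocycles_def by simp
qed

lemma locally_constant_iter_lags:
  "locally_constant (subtopology (bdry_top E) (bdry_ge E n)) (iter_lags (shift E) k l n)"
proof (induction n)
  case 0
  show ?case using locally_constant_const[of _ "(0::nat, 0::nat)"] by (simp add: fun_eq_iff)
next
  case (Suc n)
  let ?X = "subtopology (bdry_top E) (bdry_ge E (Suc n))"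
  have "continuous_map ?X (bdry_top E) (shift E ^^ n)"
    using continuous_map_from_subtopology_mono[OF continuous_map_funpow_shift[OF wf_E, of n] bdry_ge_antimono[of n "Suc n"]] by simp
  moreover have "(shift E ^^ n) \<in> topspace ?X \<rightarrow> bdry_ge E 1"
  proof
    fix x assume "x \<in> topspace ?X"
    then have "x \<in> bdry_ge E (1 + n)" by simp
    then show "(shift E ^^ n) x \<in> bdry_ge E 1" by (rule funpow_shift_in_bdry_ge[OF wf_E])
  qed
  ultimately have c: "continuous_map ?X (subtopology (bdry_top E) (bdry_ge E 1)) (shift E ^^ n)"
    using continuous_map_into_subtopology by blast
  have "locally_constant (subtopology (bdry_top E) (bdry_ge E 1)) k"
    and "locally_constant (subtopology (bdry_top E) (bdry_ge E 1)) l"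
    using cocycles unfolding graph_orbit_cocycles_def continuous_map_discrete_topology_iff by blast+
  then have "locally_constant ?X (\<lambda>x. k ((shift E ^^ n) x))" and "locally_constant ?X (\<lambda>x. l ((shift E ^^ n) x))"
    using locally_constant_compose[OF c] by blast+
  then have "locally_constant ?X (\<lambda>x. (k ((shift E ^^ n) x), l ((shift E ^^ n) x)))"
    using locally_constant_combine[of ?X _ _ Pair] by blast
  moreover have "locally_constant ?X (iter_lags (shift E) k l n)"
    using locally_constant_subtopology_mono[OF Suc.IH bdry_ge_antimono[of n "Suc n"]] by simp
  ultimately show ?case
    using locally_constant_combine[of ?X _ _ compose_lags] by (simp add: fun_eq_iff)
qed

definition action_lags :: "'v \<times> 'e list \<Rightarrow> 'v \<times> 'e list \<Rightarrow> ('v, 'e) bpath \<Rightarrow> nat \<times> nat" where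
  "action_lags \<mu> \<nu> x = compose_lags (prod.swap (iter_lags (shift E) k l (length (snd \<nu>)) x))
     (iter_lags (shift E) k l (length (snd \<mu>)) (can_act E (Some (\<mu>, \<nu>)) x))"

lemma tail_eq_action_lags:
  assumes p1: "(v1, es1) \<in> fpaths E" and p2: "(v2, es2) \<in> fpaths E"
    and pr: "prange E (v1, es1) = prange E (v2, es2)" and x: "x \<in> cyl E (v2, es2)"
  shows "tail_eq F (\<phi> x) (\<phi> (can_act E (Some ((v1, es1), (v2, es2))) x)) (action_lags (v1, es1) (v2, es2) x)"
proof -
  let ?y = "can_act E (Some ((v1, es1), (v2, es2))) x"
  obtain z where z: "x = pcat (v2, es2) z" "z \<in> bdry E" "bsrc E z = prange E (v2, es2)"
      "(shift E ^^ length es2) x = z" "x \<in> bdry_ge E (length es2)"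
    by (rule cylE[OF wf_E p2 x])
  have y: "?y = pcat (v1, es1) z" using can_act_pcat[OF wf_E p2 z(2) z(3)] z(1) by simp
  have "is_bdry_path E z" using z(2) bdry_iff_is_bdry_path[OF wf_E] by blast
  then have "(shift E ^^ length es1) ?y = z" using funpow_shift_pcat[OF wf_E p1] z(3) pr y by simp
  moreover have "?y \<in> bdry_ge E (length es1)"
    using cyl_subset_bdry_ge[OF wf_E p1] can_act_mem_cyl[OF wf_E p2 pr x] by blast
  ultimately have "tail_eq F (\<phi> z) (\<phi> ?y) (iter_lags (shift E) k l (length es1) ?y)"
    using tail_eq_iter_lags by metis
  moreover have "tail_eq F (\<phi> x) (\<phi> z) (prod.swap (iter_lags (shift E) k l (length es2) x))"
    using tail_eq_swap[OF tail_eq_iter_lags[OF z(5)]] z(4) by simp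
  ultimately show ?thesis unfolding action_lags_def using tail_eq_trans by simp
qed

text \<open>The lags bring \<open>\<phi> x\<close> and \<open>\<phi> (\<theta>\<^sub>s x)\<close> to a common tail; the cocycle takes the two
  prefixes in front of it.\<close>

definition action_cocycle ::
  "(('v \<times> 'e list) \<times> ('v \<times> 'e list)) option \<times> ('v, 'e) bpath \<Rightarrow> (('w \<times> 'f list) \<times> ('w \<times> 'f list)) option" where
  "action_cocycle sx = (case sx of
      (None, x) \<Rightarrow> None
    | (Some (\<mu>, \<nu>), x) \<Rightarrow> Some (path_prefix F (snd (action_lags \<mu> \<nu> x)) (\<phi> (can_act E (Some (\<mu>, \<nu>)) x)),
                                path_prefix F (fst (action_lags \<mu> \<nu> x)) (\<phi> x)))"

lemma action_cocycle_intertwines: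
  assumes s: "s \<in> graph_semigroup E" and x: "x \<in> can_dom E s"
  shows "action_cocycle (s, x) \<in> graph_semigroup F \<and> \<phi> x \<in> can_dom F (action_cocycle (s, x))
    \<and> \<phi> (can_act E s x) = can_act F (action_cocycle (s, x)) (\<phi> x)"
  using s
proof (cases rule: graph_semigroup_cases)
  case None
  then show ?thesis using x by simp
next
  case (Some v1 es1 v2 es2)
  then have xc: "x \<in> cyl E (v2, es2)" using x by simp
  have "x \<in> bdry E" "can_act E s x \<in> bdry E"
    using xc can_act_mem_cyl[OF wf_E Some(3,4) xc] cyl_subset_bdry[OF wf_E] Some(2,3) Some(1) by blast+
  then show ?thesis
    using can_act_path_prefixes[OF wf_F bdry_image bdry_image tail_eq_action_lags[OF Some(2-4) xc]] Some(1)
    by (simp add: action_cocycle_def)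
qed

lemma locally_constant_action_cocycle:
  assumes p1: "(v1, es1) \<in> fpaths E" and p2: "(v2, es2) \<in> fpaths E"
    and pr: "prange E (v1, es1) = prange E (v2, es2)"
  shows "locally_constant (subtopology (bdry_top E) (cyl E (v2, es2)))
    (\<lambda>x. action_cocycle (Some ((v1, es1), (v2, es2)), x))"
proof -
  let ?X = "subtopology (bdry_top E) (cyl E (v2, es2))"
  let ?\<theta> = "can_act E (Some ((v1, es1), (v2, es2)))"
  let ?L = "action_lags (v1, es1) (v2, es2)"
  have \<theta>: "continuous_map ?X (bdry_top E) ?\<theta>"
    by (rule continuous_map_can_act[OF wf_E p1 p2 pr])
  have "?\<theta> \<in> topspace ?X \<rightarrow> bdry_ge E (length es1)"
    using cyl_subset_bdry_ge[OF wf_E p1] can_act_mem_cyl[OF wf_E p2 pr] by auto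
  then have "continuous_map ?X (subtopology (bdry_top E) (bdry_ge E (length es1))) ?\<theta>"
    using continuous_map_into_subtopology[OF \<theta>] by blast
  then have "locally_constant ?X (\<lambda>x. iter_lags (shift E) k l (length es1) (?\<theta> x))"
    by (rule locally_constant_compose[OF _ locally_constant_iter_lags])
  moreover have "locally_constant ?X (iter_lags (shift E) k l (length es2))"
    by (rule locally_constant_subtopology_mono[OF locally_constant_iter_lags cyl_subset_bdry_ge[OF wf_E p2]])
  ultimately have L: "locally_constant ?X ?L"
    unfolding action_lags_def using locally_constant_combine[of ?X _ _ "\<lambda>a b. compose_lags (prod.swap a) b"]
    by simp
  have bound: "enat (fst (?L x)) \<le> blen (\<phi> x) \<and> enat (snd (?L x)) \<le> blen (\<phi> (?\<theta> x))"
    if "x \<in> topspace ?X" for x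
    using tail_eq_action_lags[OF p1 p2 pr] that unfolding tail_eq_def by simp
  have "continuous_map ?X (bdry_top F) \<phi>"
    using continuous_\<phi> by (rule continuous_map_from_subtopology)
  then have "locally_constant ?X (\<lambda>x. path_prefix F (fst (?L x)) (\<phi> x))"
    using locally_constant_path_prefix[OF wf_F locally_constant_map[OF L]] bound by blast
  moreover have "continuous_map ?X (bdry_top F) (\<lambda>x. \<phi> (?\<theta> x))"
    using continuous_map_compose[OF \<theta> continuous_\<phi>] by (simp add: o_def)
  then have "locally_constant ?X (\<lambda>x. path_prefix F (snd (?L x)) (\<phi> (?\<theta> x)))"
    using locally_constant_path_prefix[OF wf_F locally_constant_map[OF L]] bound by blast
  ultimately show ?thesis
    using locally_constant_combine[of ?X _ _ "\<lambda>a b. Some (b, a)"] by (simp add: action_cocycle_def)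
qed

lemma action_orbit_cocycle_action_cocycle:
  "action_orbit_cocycle (graph_semigroup E) (bdry_top E) (can_dom E) (can_act E)
     (graph_semigroup F) (can_dom F) (can_act F) \<phi> action_cocycle"
proof -
  have "locally_constant (subtopology (bdry_top E) (can_dom E s)) (\<lambda>x. action_cocycle (s, x))"
    if "s \<in> graph_semigroup E" for s
    using that
  proof (cases rule: graph_semigroup_cases)
    case None
    then show ?thesis by (simp add: locally_constant_def)
  next
    case (Some v1 es1 v2 es2)
    then show ?thesis using locally_constant_action_cocycle by simp
  qed
  then have "locally_constant (subtopology (prod_topology (discrete_topology (graph_semigroup E)) (bdry_top E))
      {(s, x). s \<in> graph_semigroup E \<and> x \<in> can_dom E s}) action_cocycle"
    by (intro locally_constant_prod_discrete) blast
  then show ?thesis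
    unfolding action_orbit_cocycle_def continuous_map_discrete_topology_iff
    using action_cocycle_intertwines by auto
qed

end

section \<open>From cocycles of the canonical action to orbit cocycles of the shift\<close>

text \<open>The element \<open>(r(x\<^sub>1), x\<^sub>1)\<close> of \<open>S\<^sub>E\<close>, whose canonical action on \<open>Z(x\<^sub>1)\<close> is the shift.\<close>

definition shift_element :: "('v, 'e) dgraph \<Rightarrow> ('v, 'e) bpath \<Rightarrow> (('v \<times> 'e list) \<times> ('v \<times> 'e list)) option" where
  "shift_element E x = Some ((prange E (path_prefix E 1 x), []), path_prefix E 1 x)"

lemma shift_element:
  assumes wf: "wf_graph E" and x: "x \<in> bdry_ge E 1"
  shows "shift_element E x \<in> graph_semigroup E" and "x \<in> can_dom E (shift_element E x)"
    and "can_act E (shift_element E x) x = shift E x"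
proof -
  have xb: "x \<in> bdry E" and x1: "enat 1 \<le> blen x" using x unfolding bdry_ge_def by auto
  have b: "is_bdry_path E x" using xb bdry_iff_is_bdry_path[OF wf] by blast
  obtain v es where ve: "path_prefix E 1 x = (v, es)" by (cases "path_prefix E 1 x")
  have p: "(v, es) \<in> fpaths E" using path_prefix_in_fpaths[OF b x1] ve by simp
  have r: "prange E (v, es) = bsrc E (shift E x)" using prange_path_prefix[OF wf b x1] ve by simp
  have "bsrc E (shift E x) \<in> verts E"
    using is_bdry_path_shift[OF wf b] unfolding is_bdry_path_def by blast
  then have "(prange E (v, es), []) \<in> fpaths E" using r by (simp add: fpaths_def)
  then show "shift_element E x \<in> graph_semigroup E"
    using p ve by (simp add: shift_element_def graph_semigroup_def prange_def)
  have xc: "x \<in> cyl E (v, es)" using mem_cyl_path_prefix[OF wf xb x1] ve by simp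
  then show "x \<in> can_dom E (shift_element E x)" using ve by (simp add: shift_element_def)
  have "length es = 1" using arg_cong[OF ve, of "\<lambda>p. length (snd p)"] by simp
  then show "can_act E (shift_element E x) x = shift E x"
    using can_act_eq_pcat_funpow_shift[OF wf p xc] pcat_Nil[of E "shift E x"] r ve
    by (simp add: shift_element_def)
qed

lemma locally_constant_shift_element:
  assumes wf: "wf_graph E"
  shows "locally_constant (subtopology (bdry_top E) (bdry_ge E 1)) (shift_element E)"
proof -
  have "locally_constant (subtopology (bdry_top E) (bdry_ge E 1)) (\<lambda>x. path_prefix E 1 (id x))"
    by (rule locally_constant_path_prefix[OF wf locally_constant_const])
      (auto simp: continuous_map_from_subtopology bdry_ge_def)
  then show ?thesis
    using locally_constant_map[where h = "\<lambda>\<mu>. Some ((prange E \<mu>, []), \<mu>)"]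
    by (simp add: shift_element_def[abs_def])
qed

context
  fixes E :: "('v, 'e) dgraph" and F :: "('w, 'f) dgraph"
    and \<phi> :: "('v, 'e) bpath \<Rightarrow> ('w, 'f) bpath"
    and a :: "(('v \<times> 'e list) \<times> ('v \<times> 'e list)) option \<times> ('v, 'e) bpath \<Rightarrow> (('w \<times> 'f list) \<times> ('w \<times> 'f list)) option"
  assumes wf_E: "wf_graph E" and wf_F: "wf_graph F"
    and cocycle: "action_orbit_cocycle (graph_semigroup E) (bdry_top E) (can_dom E) (can_act E)
                    (graph_semigroup F) (can_dom F) (can_act F) \<phi> a"
begin

definition shift_lags :: "('v, 'e) bpath \<Rightarrow> nat \<times> nat" where
  "shift_lags x = (case a (shift_element E x, x) of
      None \<Rightarrow> (0, 0)
    | Some (\<mu>, \<nu>) \<Rightarrow> (length (snd \<mu>), length (snd \<nu>)))"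

lemma locally_constant_shift_lags:
  "locally_constant (subtopology (bdry_top E) (bdry_ge E 1)) shift_lags"
proof -
  let ?X = "subtopology (bdry_top E) (bdry_ge E 1)"
  let ?Z = "subtopology (prod_topology (discrete_topology (graph_semigroup E)) (bdry_top E))
    {(s, x). s \<in> graph_semigroup E \<and> x \<in> can_dom E s}"
  have "continuous_map ?X (discrete_topology (graph_semigroup E)) (shift_element E)"
    unfolding continuous_map_discrete_topology_iff
    using shift_element(1)[OF wf_E] locally_constant_shift_element[OF wf_E]
    by (auto simp: topspace_bdry_top[OF wf_E] bdry_ge_def)
  then have "continuous_map ?X (prod_topology (discrete_topology (graph_semigroup E)) (bdry_top E))
      (\<lambda>x. (shift_element E x, x))"
    by (intro continuous_map_pairedI) simp_all
  moreover have "(\<lambda>x. (shift_element E x, x)) \<in> topspace ?X \<rightarrow> {(s, x). s \<in> graph_semigroup E \<and> x \<in> can_dom E s}"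
    using shift_element(1,2)[OF wf_E] by (auto simp: topspace_bdry_top[OF wf_E] bdry_ge_def)
  ultimately have "continuous_map ?X ?Z (\<lambda>x. (shift_element E x, x))"
    using continuous_map_into_subtopology by blast
  moreover have "locally_constant ?Z a"
    using cocycle unfolding action_orbit_cocycle_def continuous_map_discrete_topology_iff by blast
  ultimately have "locally_constant ?X (\<lambda>x. a (shift_element E x, x))"
    by (rule locally_constant_compose)
  then show ?thesis
    unfolding shift_lags_def by (rule locally_constant_map)
qed

lemma tail_eq_shift_lags:
  assumes x: "x \<in> bdry_ge E 1"
  shows "tail_eq F (\<phi> (shift E x)) (\<phi> x) (shift_lags x)"
proof -
  let ?t = "a (shift_element E x, x)"
  let ?Z = "subtopology (prod_topology (discrete_topology (graph_semigroup E)) (bdry_top E))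
    {(s, x). s \<in> graph_semigroup E \<and> x \<in> can_dom E s}"
  have a: "continuous_map ?Z (discrete_topology (graph_semigroup F)) a"
    and intertwines: "\<forall>s \<in> graph_semigroup E. \<forall>x \<in> can_dom E s.
      \<phi> x \<in> can_dom F (a (s, x)) \<and> \<phi> (can_act E s x) = can_act F (a (s, x)) (\<phi> x)"
    using cocycle unfolding action_orbit_cocycle_def by blast+
  have "x \<in> bdry E" using x by (simp add: bdry_ge_def)
  then have "(shift_element E x, x) \<in> topspace ?Z"
    using shift_element(1,2)[OF wf_E x] by (simp add: topspace_bdry_top[OF wf_E])
  then have "?t \<in> graph_semigroup F"
    using continuous_map_image_subset_topspace[OF a] by auto
  moreover have "\<phi> x \<in> can_dom F ?t \<and> \<phi> (can_act E (shift_element E x) x) = can_act F ?t (\<phi> x)"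
    using intertwines shift_element(1,2)[OF wf_E x] by blast
  then have t: "\<phi> x \<in> can_dom F ?t" "\<phi> (shift E x) = can_act F ?t (\<phi> x)"
    using shift_element(3)[OF wf_E x] by simp_all
  ultimately show ?thesis
  proof (cases rule: graph_semigroup_cases)
    case None
    then show ?thesis using t by simp
  next
    case (Some w1 fs1 w2 fs2)
    then show ?thesis
      using tail_eq_can_act[OF wf_F Some(2-4), of "\<phi> x"] t by (simp add: shift_lags_def)
  qed
qed

lemma graph_orbit_cocycles_shift_lags:
  "graph_orbit_cocycles E F \<phi> (\<lambda>x. fst (shift_lags x)) (\<lambda>x. snd (shift_lags x))"
  unfolding graph_orbit_cocycles_def continuous_map_discrete_topology_iff
  using locally_constant_map[OF locally_constant_shift_lags] tail_eq_shift_lags by auto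

end


lemma ex_graph_orbit_cocycles_iff_ex_action_orbit_cocycle:
  assumes "wf_graph E" "wf_graph F" "continuous_map (bdry_top E) (bdry_top F) \<phi>"
  shows "(\<exists>k l. graph_orbit_cocycles E F \<phi> k l) \<longleftrightarrow>
    (\<exists>a. action_orbit_cocycle (graph_semigroup E) (bdry_top E) (can_dom E) (can_act E)
           (graph_semigroup F) (can_dom F) (can_act F) \<phi> a)"
  using action_orbit_cocycle_action_cocycle[OF assms] graph_orbit_cocycles_shift_lags[OF assms(1,2)]
  by blast

theorem proposition9p12:
  fixes E :: "('v, 'e) dgraph" and F :: "('w, 'f) dgraph"
  assumes "wf_graph E" and "wf_graph F"
  shows "graph_coe E F \<longleftrightarrow>
    action_coe (graph_semigroup E) (bdry_top E) (can_dom E) (can_act E)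
               (graph_semigroup F) (bdry_top F) (can_dom F) (can_act F)"
  unfolding graph_coe_iff_orbit_cocycles action_coe_iff_orbit_cocycles
  using ex_graph_orbit_cocycles_iff_ex_action_orbit_cocycle[OF assms]
    ex_graph_orbit_cocycles_iff_ex_action_orbit_cocycle[OF assms(2,1)]
  by (meson homeomorphic_maps_def)

end
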